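(* Let $\triangle PQR$ be a triangle contained in $D$ with $\delta(P,Q,R)>\Delta'(P,Q)$. Then there exists $w\in S^1$ such that for every $w'\in\pi^{-1}(w)$, $\overline{\psi_{\triangle PQR}}^{\,3}(w')<w'+1$.
   Context: $D$ is the open unit disk in $\mathbb{R}^2$ (Beltrami–Klein model) and $S^1$ its boundary, identified with $\mathbb{R}/\mathbb{Z}$ via $t\mapsto(\cos2\pi t,\sin2\pi t)$; $\pi:\mathbb{R}\to S^1$, $\pi(x)=x-\lfloor x\rfloor$. For $P,Q\in D$ with chord endpoints $v_1,v_2\in S^1$, $d'(P,Q)=\frac12\left|\log\frac{|v_1Q||v_2P|}{|v_1P||v_2Q|}\right|$, $\Delta'(P,Q)=\log\frac{e^{d'(P,Q)}+1}{e^{d'(P,Q)}-1}$, and $\delta(P,Q,R)$ is the minimum of $d'(R,S)$ over points $S\in D$ on the line $PQ$. For a (non-degenerate, closed) triangle $\triangle PQR\subset D$ and $v\in S^1$, there are exactly two chords $vv_1,vv_2$ of $S^1$ whose lines support $\triangle PQR$; with $v_1$ the one reached first moving counterclockwise from $v$, set $\psi_{\triangle PQR}(v):=v_1$ (a homeomorphism of $S^1$). $\overline{\psi_{\triangle PQR}}$ is its lift to $\mathbb{R}$ with $\overline{\psi_{\triangle PQR}}(0)\in(0,1)$. *)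

theory Defs
  imports "HOL-Analysis.Analysis"
begin

text \<open>The plane R^2 is identified with the complex numbers. D is the open unit disk
(Beltrami--Klein model), S^1 = sphere 0 1 its boundary.\<close>

definition KD :: "complex set" where
  "KD = ball 0 1"

definition S1 :: "complex set" where
  "S1 = sphere 0 1"

text \<open>Identification of R/Z with S^1: t maps to (cos 2 pi t, sin 2 pi t).\<close>
definition circ :: "real \<Rightarrow> complex" where
  "circ t = cis (2 * pi * t)"

definition chord_ends :: "complex \<Rightarrow> complex \<Rightarrow> complex \<times> complex" where
  "chord_ends P Q = (SOME (v1, v2). v1 \<in> S1 \<and> v2 \<in> S1 \<and> v1 \<noteq> v2 \<and>
                       {P, Q} \<subseteq> affine hull {v1, v2})"

definition dprime :: "complex \<Rightarrow> complex \<Rightarrow> real" where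
  "dprime P Q = (case chord_ends P Q of (v1, v2) \<Rightarrow>
     \<bar>ln ((cmod (Q - v1) * cmod (P - v2)) / (cmod (P - v1) * cmod (Q - v2)))\<bar> / 2)"

definition Deltaprime :: "complex \<Rightarrow> complex \<Rightarrow> real" where
  "Deltaprime P Q = ln ((exp (dprime P Q) + 1) / (exp (dprime P Q) - 1))"

definition delta :: "complex \<Rightarrow> complex \<Rightarrow> complex \<Rightarrow> real" where
  "delta P Q R = Inf {dprime R S | S. S \<in> KD \<and> S \<in> affine hull {P, Q}}"

definition cross :: "complex \<Rightarrow> complex \<Rightarrow> real" where
  "cross a b = Im (cnj a * b)"

definition supports :: "complex \<Rightarrow> complex \<Rightarrow> complex set \<Rightarrow> bool" where
  "supports v w T \<longleftrightarrow> (\<exists>z\<in>T. cross (w - v) (z - v) = 0) \<and>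
     ((\<forall>z\<in>T. cross (w - v) (z - v) \<ge> 0) \<or> (\<forall>z\<in>T. cross (w - v) (z - v) \<le> 0))"

definition ccw_dist :: "complex \<Rightarrow> complex \<Rightarrow> real" where
  "ccw_dist v w = frac (Arg (w / v) / (2 * pi))"

definition psi_tri :: "complex set \<Rightarrow> complex \<Rightarrow> complex" where
  "psi_tri T v = (THE w. w \<in> S1 \<and> w \<noteq> v \<and> supports v w T \<and>
      (\<forall>w'. w' \<in> S1 \<and> w' \<noteq> v \<and> supports v w' T \<longrightarrow> ccw_dist v w \<le> ccw_dist v w'))"

definition psi_lift :: "complex set \<Rightarrow> real \<Rightarrow> real" where
  "psi_lift T = (THE f. continuous_on UNIV f \<and> (\<forall>x. circ (f x) = psi_tri T (circ x)) \<and>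
                        0 < f 0 \<and> f 0 < 1)"

end

theory Submission
  imports Defs
begin

text \<open>For v on the circle, \<psi>(v) is the first, counterclockwise from v, of the second endpoints
of the three chords through v and a vertex. So the lift of \<psi> is the minimum of three
degree-one homeomorphisms of the line and is itself strictly increasing. Suppose some c on the
circle lies to the right of PQ and, with v1 and v2 the second endpoints of the chords through c
and Q resp. c and P, the vertex R lies strictly to the right of the chord v1 v2. Then starting
at c, one step of the lift gets no further than v1 (the chord through Q), the next stops
strictly before v2 (the chord from v1 through R), and the third gets no further than c (the
chord from v2 through P): three steps make less than a full turn.

Such a c exists when \<delta>(P,Q,R) > \<Delta>'(P,Q). The hypothesis and the existence of c are invariant
under projective automorphisms of the disk, which are the isometries of the Klein model, so one
may assume that P, Q lie on the real diameter and R on the imaginary one. There the hypothesis,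
evaluated at the foot S = 0, bounds R away from the line PQ, and c is written down explicitly.\<close>

section \<open>Lines in the plane\<close>

lemma S1_iff: "w \<in> S1 \<longleftrightarrow> cmod w = 1"
  by (simp add: S1_def)

lemma KD_iff: "w \<in> KD \<longleftrightarrow> cmod w < 1"
  by (simp add: KD_def)

lemma cross_altdef: "cross a b = Re a * Im b - Im a * Re b"
  by (simp add: cross_def)

lemma cross_scale_left: "cross (of_real a * d) e = a * cross d e"
  by (simp add: cross_altdef algebra_simps)

lemma cross_scale_right: "cross d (of_real a * e) = a * cross d e"
  by (simp add: cross_altdef algebra_simps)

lemma cross_self [simp]: "cross a a = 0"
  by (simp add: cross_altdef)

lemma cnj_mult_self_eq_1: "cmod v = 1 \<Longrightarrow> cnj v * v = 1"
  by (metis complex_norm_square mult.commute of_real_1 one_power2)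

lemma cross_rotate:
  assumes "cmod w = 1"
  shows "cross (w * a) (w * b) = cross a b"
proof -
  have "cnj (w * a) * (w * b) = (cnj w * w) * (cnj a * b)" by (simp add: mult_ac)
  also have "\<dots> = cnj a * b" by (simp only: cnj_mult_self_eq_1[OF assms] mult_1)
  finally have eq: "cnj (w * a) * (w * b) = cnj a * b" .
  show ?thesis unfolding cross_def by (simp only: eq)
qed

lemma cmod_eq_1_iff: "cmod v = 1 \<longleftrightarrow> (Re v)^2 + (Im v)^2 = 1"
  by (metis cmod_power2 norm_ge_zero one_power2 power2_eq_imp_eq zero_le_one)

lemma cmod_less_1_iff: "cmod v < 1 \<longleftrightarrow> (Re v)^2 + (Im v)^2 < 1"
proof -
  have "cmod v < 1 \<longleftrightarrow> (cmod v)^2 < 1"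
    by (metis abs_norm_cancel abs_square_less_1)
  then show ?thesis by (simp add: cmod_power2)
qed

lemma cmod_line_power2:
  "(cmod (c + of_real l * d))^2 = (cmod c)^2 + 2 * l * Re (cnj c * d) + l^2 * (cmod d)^2"
  unfolding cmod_power2 by (simp add: power2_eq_square algebra_simps)

lemma cross_eq_0_parallel:
  assumes "d \<noteq> 0" "cross d e = 0"
  shows "e = of_real (Re (cnj d * e) / (cmod d)^2) * d"
proof -
  have D: "(Re d)^2 + (Im d)^2 \<noteq> 0" using assms(1)
    by (metis cmod_power2 zero_eq_power2 norm_eq_zero)
  have c: "Re d * Im e = Im d * Re e" using assms(2) by (simp add: cross_altdef)
  have "Re e = (Re d * Re e + Im d * Im e) / ((Re d)^2 + (Im d)^2) * Re d"
       "Im e = (Re d * Re e + Im d * Im e) / ((Re d)^2 + (Im d)^2) * Im d"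
    using D c by (simp_all add: field_simps power2_eq_square)
  then show ?thesis unfolding cmod_power2 by (simp add: complex_eq_iff)
qed

lemma affine_hull_2_param: "z \<in> affine hull {a, b} \<longleftrightarrow> (\<exists>l. z = a + of_real l * (b - a))"
proof
  assume "z \<in> affine hull {a, b}"
  then obtain u v where z: "z = u *\<^sub>R a + v *\<^sub>R b" and uv: "u + v = 1"
    unfolding affine_hull_2 by blast
  have "z = (1 - v) *\<^sub>R a + v *\<^sub>R b" using z uv by (simp add: eq_diff_eq)
  then have "z = a + of_real v * (b - a)"
    by (simp add: scaleR_conv_of_real algebra_simps)
  then show "\<exists>l. z = a + of_real l * (b - a)" by blast
next
  assume "\<exists>l. z = a + of_real l * (b - a)"
  then obtain l where "z = a + of_real l * (b - a)" by blast
  then have "z = (1 - l) *\<^sub>R a + l *\<^sub>R b" by (simp add: scaleR_conv_of_real algebra_simps)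
  then show "z \<in> affine hull {a, b}" unfolding affine_hull_2 by force
qed

lemma affine_hull_2_iff_cross:
  assumes "P \<noteq> Q"
  shows "z \<in> affine hull {P, Q} \<longleftrightarrow> cross (Q - P) (z - P) = 0"
proof
  assume "z \<in> affine hull {P, Q}"
  then obtain l where "z = P + of_real l * (Q - P)" unfolding affine_hull_2_param by blast
  then show "cross (Q - P) (z - P) = 0" by (simp add: cross_scale_right)
next
  assume c: "cross (Q - P) (z - P) = 0"
  have "Q - P \<noteq> 0" using assms by simp
  from cross_eq_0_parallel[OF this c]
  have "z = P + of_real (Re (cnj (Q - P) * (z - P)) / (cmod (Q - P))^2) * (Q - P)"
    by (metis add.commute diff_add_cancel)
  then show "z \<in> affine hull {P, Q}" unfolding affine_hull_2_param by blast
qed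

lemma collinear_if_cross_eq_0:
  assumes "cross (Q - P) (R - P) = 0"
  shows "collinear {P, Q, R}"
proof (cases "P = Q")
  case True then show ?thesis by (simp add: collinear_2)
next
  case False
  then obtain l where R: "R = P + of_real l * (Q - P)"
    using affine_hull_2_iff_cross assms unfolding affine_hull_2_param by blast
  have "R - Q = (1 - l) *\<^sub>R (P - Q)" unfolding R by (simp add: scaleR_conv_of_real algebra_simps)
  then have "collinear {0, P - Q, R - Q}" unfolding collinear_lemma by blast
  then show ?thesis by (subst collinear_3) auto
qed

lemma cross_convex_hull_3:
  assumes "z \<in> convex hull {P, Q, R}"
  obtains a b c where "0 \<le> a" "0 \<le> b" "0 \<le> c" "a + b + c = 1"
    "cross d (z - v) = a * cross d (P - v) + b * cross d (Q - v) + c * cross d (R - v)"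
proof -
  obtain a b c where abc: "0 \<le> a" "0 \<le> b" "0 \<le> c" "a + b + c = 1"
    and z: "z = a *\<^sub>R P + b *\<^sub>R Q + c *\<^sub>R R"
    using assms unfolding convex_hull_3 by blast
  have e: "z - v = a *\<^sub>R (P - v) + b *\<^sub>R (Q - v) + c *\<^sub>R (R - v)"
    using z abc(4) by (simp add: algebra_simps) (metis add.assoc scaleR_add_left scaleR_one)
  have "cross d (z - v) = a * cross d (P - v) + b * cross d (Q - v) + c * cross d (R - v)"
    by (simp only: e) (simp add: cross_altdef scaleR_conv_of_real algebra_simps)
  then show ?thesis using abc that by blast
qed

lemma cross_convex_hull_3_nonneg:
  assumes "z \<in> convex hull {P, Q, R}"
    and "cross d (P - v) \<ge> 0" "cross d (Q - v) \<ge> 0" "cross d (R - v) \<ge> 0"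
  shows "cross d (z - v) \<ge> 0"
  by (rule cross_convex_hull_3[OF assms(1), where d = d and v = v]) (use assms(2-4) in simp)

lemma cross_convex_hull_3_pos:
  assumes "z \<in> convex hull {P, Q, R}"
    and "cross d (P - v) > 0" "cross d (Q - v) > 0" "cross d (R - v) > 0"
  shows "cross d (z - v) > 0"
proof (rule cross_convex_hull_3[OF assms(1), where d = d and v = v])
  fix a b c :: real
  assume "0 \<le> a" "0 \<le> b" "0 \<le> c" "a + b + c = 1"
    and e: "cross d (z - v) = a * cross d (P - v) + b * cross d (Q - v) + c * cross d (R - v)"
  then have "a > 0 \<or> b > 0 \<or> c > 0" by linarith
  then show ?thesis unfolding e using \<open>0 \<le> a\<close> \<open>0 \<le> b\<close> \<open>0 \<le> c\<close> assms(2-4)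
    by (smt (verit, best) mult_nonneg_nonneg mult_pos_pos)
qed

section \<open>Chords of the unit circle\<close>

text \<open>On the line v + l (X - v) through v on the circle, the circle is met at l = 0 and at
l = chord_param X v.\<close>

definition chord_param :: "complex \<Rightarrow> complex \<Rightarrow> real" where
  "chord_param X v = 2 * (1 - Re (cnj v * X)) / (cmod (X - v))^2"

definition other_end :: "complex \<Rightarrow> complex \<Rightarrow> complex" where
  "other_end X v = v + of_real (chord_param X v) * (X - v)"

lemma chord_param_gt_1:
  assumes "cmod X < 1" "cmod v = 1"
  shows "chord_param X v > 1"
proof -
  have pos: "(cmod (X - v))^2 > 0" using assms by auto
  have "(Re v)^2 + (Im v)^2 = 1" "(Re X)^2 + (Im X)^2 < 1"
    using assms cmod_eq_1_iff cmod_less_1_iff by blast+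
  then have "(cmod (X - v))^2 < 2 * (1 - Re (cnj v * X))"
    by (simp add: cmod_power2 power2_diff algebra_simps)
  then show ?thesis using pos by (simp add: chord_param_def)
qed

lemma cmod_line_eq_1_iff:
  assumes "cmod c = 1" "d \<noteq> 0"
  shows "cmod (c + of_real l * d) = 1 \<longleftrightarrow> l = 0 \<or> l = - 2 * Re (cnj c * d) / (cmod d)^2"
proof -
  have pos: "(cmod d)^2 > 0" using assms by simp
  have "cmod (c + of_real l * d) = 1 \<longleftrightarrow> (cmod (c + of_real l * d))^2 = 1"
    by (metis norm_ge_zero one_power2 power2_eq_imp_eq zero_le_one)
  also have "\<dots> \<longleftrightarrow> l * (2 * Re (cnj c * d) + l * (cmod d)^2) = 0"
    unfolding cmod_line_power2 using assms(1) by (simp add: power2_eq_square algebra_simps)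
  also have "\<dots> \<longleftrightarrow> l = 0 \<or> 2 * Re (cnj c * d) + l * (cmod d)^2 = 0"
    by simp
  also have "\<dots> \<longleftrightarrow> l = 0 \<or> l = - 2 * Re (cnj c * d) / (cmod d)^2"
    using pos by (auto simp: field_simps)
  finally show ?thesis .
qed

lemma chord_param_altdef:
  assumes "cmod v = 1"
  shows "chord_param X v = - 2 * Re (cnj v * (X - v)) / (cmod (X - v))^2"
  using cnj_mult_self_eq_1[OF assms] unfolding chord_param_def by (simp add: algebra_simps)

lemma cmod_other_end:
  assumes "cmod X < 1" "cmod v = 1"
  shows "cmod (other_end X v) = 1"
proof -
  have "X - v \<noteq> 0" using assms by auto
  then show ?thesis unfolding other_end_def
    using cmod_line_eq_1_iff[OF assms(2)] chord_param_altdef[OF assms(2)] by blast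
qed

lemma other_end_neq:
  assumes "cmod X < 1" "cmod v = 1"
  shows "other_end X v \<noteq> v"
  using chord_param_gt_1[OF assms] assms by (auto simp: other_end_def)

lemma other_end_minus: "other_end X v - v = of_real (chord_param X v) * (X - v)"
  by (simp add: other_end_def)

lemma other_end_chord:
  assumes "cmod X < 1" "cmod v = 1"
  shows "X - v = of_real (1 / chord_param X v) * (other_end X v - v)"
  using chord_param_gt_1[OF assms] by (simp add: other_end_def)

lemma cross_other_end: "cross (X - v) (other_end X v - v) = 0"
  by (simp add: other_end_minus cross_scale_right)

lemma other_end_unique:
  assumes "cmod X < 1" "cmod c = 1" "cmod u = 1" "u \<noteq> c" "cross (X - c) (u - c) = 0"
  shows "u = other_end X c"
proof -
  have ne: "X - c \<noteq> 0" using assms by auto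
  define l where "l = Re (cnj (X - c) * (u - c)) / (cmod (X - c))^2"
  have u: "u = c + of_real l * (X - c)"
    using cross_eq_0_parallel[OF ne assms(5)] l_def by (metis add.commute diff_add_cancel)
  have "l \<noteq> 0" using u assms(4) by auto
  then have "l = chord_param X c"
    using cmod_line_eq_1_iff[OF assms(2) ne, of l] u assms(3)
    unfolding chord_param_altdef[OF assms(2)] by auto
  then show ?thesis using u by (simp add: other_end_def)
qed

lemma other_end_involution:
  assumes "cmod X < 1" "cmod v = 1"
  shows "other_end X (other_end X v) = v"
proof -
  let ?w = "other_end X v"
  have "cross (X - ?w) (v - ?w) = 0"
    by (simp add: cross_altdef other_end_def algebra_simps)
  from other_end_unique[OF assms(1) cmod_other_end[OF assms] assms(2)
      other_end_neq[OF assms, symmetric] this]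
  show ?thesis by simp
qed

lemma continuous_on_other_end:
  assumes "cmod X < 1"
  shows "continuous_on S1 (other_end X)"
  unfolding other_end_def chord_param_def
  using assms by (intro continuous_intros) (auto simp: S1_def)

lemma cmod_chord_power2:
  assumes "cmod a = 1" "cmod b = 1"
  shows "(cmod (a + of_real l * (b - a)))^2 = 1 - l * (1 - l) * (cmod (b - a))^2"
proof -
  have ra: "Re (cnj a * a) = 1" and rb: "Re (cnj b * b) = 1"
    using cnj_mult_self_eq_1 assms by simp_all
  have d: "(cmod (b - a))^2 = 2 - 2 * Re (cnj a * b)"
    using ra rb unfolding cmod_power2 by (simp add: power2_eq_square algebra_simps)
  have "(cmod (a + of_real l * (b - a)))^2 = 1 + 2 * l * (Re (cnj a * b) - 1) + l^2 * (cmod (b - a))^2"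
    unfolding cmod_line_power2 using assms(1) ra by (simp add: algebra_simps)
  then show ?thesis unfolding d by (simp add: power2_eq_square algebra_simps)
qed

lemma chord_point_on_circle:
  assumes "cmod a = 1" "cmod b = 1" "a \<noteq> b" "cmod (a + of_real l * (b - a)) = 1"
  shows "l = 0 \<or> l = 1"
proof -
  have "(cmod (b - a))^2 > 0" using assms(3) by simp
  moreover have "l * (1 - l) * (cmod (b - a))^2 = 0"
    using cmod_chord_power2[OF assms(1,2), of l] assms(4) by simp
  ultimately show ?thesis by simp
qed

lemma chord_point_in_disk:
  assumes "cmod a = 1" "cmod b = 1" "a \<noteq> b" "cmod (a + of_real l * (b - a)) < 1"
  shows "0 < l \<and> l < 1"
proof -
  have p: "(cmod (b - a))^2 > 0" using assms(3) by simp
  have "(cmod (a + of_real l * (b - a)))^2 < 1"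
    using assms(4) by (metis abs_norm_cancel abs_square_less_1)
  then have "l * (1 - l) * (cmod (b - a))^2 > 0" using cmod_chord_power2[OF assms(1,2), of l] by simp
  then have "l * (1 - l) > 0" using p by (simp add: zero_less_mult_iff)
  then show ?thesis by (simp add: zero_less_mult_iff) linarith
qed

section \<open>Counterclockwise distance on the circle\<close>

lemma cmod_circ [simp]: "cmod (circ t) = 1"
  by (simp add: circ_def)

lemma circ_add_Ints:
  assumes "n \<in> \<int>" shows "circ (a + n) = circ a"
proof -
  have "cis (2*pi*(a+n)) = cis (2*pi*a) * cis (2*pi*n)" by (simp add: cis_mult distrib_left)
  then show ?thesis using assms by (simp add: circ_def)
qed

lemma circ_eq_iff: "circ a = circ b \<longleftrightarrow> (\<exists>n::int. a = b + n)"
proof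
  assume h: "circ a = circ b"
  have "cis (2 * pi * (a - b)) = 1"
    using h by (simp add: circ_def cis_divide[symmetric] right_diff_distrib)
  then have "Re (cis (2 * pi * (a - b))) = 1" by simp
  then have "cos (2 * pi * (a - b)) = 1" by simp
  then have "\<exists>n::int. 2 * pi * (a - b) = of_int n * 2 * pi" using cos_one_2pi_int by blast
  then obtain n :: int where "2 * pi * (a - b) = of_int n * 2 * pi" by blast
  then have "(a - b - n) * (2 * pi) = 0" by (simp add: algebra_simps)
  then have "a - b = n" by simp
  then show "\<exists>n::int. a = b + n" by (intro exI[of _ n]) simp
next
  assume "\<exists>n::int. a = b + n"
  then obtain n :: int where "a = b + n" by blast
  then show "circ a = circ b" using circ_add_Ints[of "of_int n" b] by simp
qed

lemma circ_Arg:
  assumes "cmod w = 1"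
  shows "w = circ (Arg w / (2 * pi))"
proof -
  have "w \<noteq> 0" using assms by auto
  then have "cis (Arg w) = sgn w" by (rule cis_Arg)
  also have "sgn w = w" using assms by (simp add: sgn_div_norm)
  finally show ?thesis by (simp add: circ_def)
qed

lemma ccw_dist_circ: "ccw_dist (circ t) (circ s) = frac (s - t)"
proof -
  define u where "u = s - t"
  define y where "y = u - of_int (ceiling (u - 1/2))"
  have y1: "- 1/2 < y" "y \<le> 1/2" unfolding y_def
    using ceiling_correct[of "u - 1/2"] by linarith+
  have "circ s / circ t = cis (2 * pi * u)"
    by (simp add: circ_def cis_divide u_def right_diff_distrib)
  also have "\<dots> = cis (2 * pi * y)"
    using circ_add_Ints[of "- of_int (ceiling (u - 1/2))" u] unfolding y_def circ_def
    by simp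
  finally have e: "circ s / circ t = cis (2 * pi * y)" .
  have "2*pi*(-1/2) < 2*pi*y" by (rule mult_strict_left_mono) (use y1 pi_gt_zero in auto)
  moreover have "2*pi*y \<le> 2*pi*(1/2)" by (rule mult_left_mono) (use y1 pi_gt_zero in auto)
  ultimately have "Arg (cis (2 * pi * y)) = 2 * pi * y"
    by (intro Arg_cis) auto
  then have "ccw_dist (circ t) (circ s) = frac y"
    unfolding ccw_dist_def e by simp
  also have "frac y = frac u" unfolding y_def
    using frac_add_of_int_right[of u "- ceiling (u - 1/2)"] by simp
  finally show ?thesis by (simp add: u_def)
qed

lemma ccw_dist_nonneg: "ccw_dist v w \<ge> 0"
  by (simp add: ccw_dist_def)

lemma ccw_dist_less_1: "ccw_dist v w < 1"
  by (simp add: ccw_dist_def frac_lt_1)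

lemma circ_add_ccw_dist:
  assumes "cmod w = 1"
  shows "circ (t + ccw_dist (circ t) w) = w"
proof -
  obtain s where s: "w = circ s" using circ_Arg[OF assms] by blast
  have "t + frac (s - t) = s + of_int (- floor (s - t))"
    by (simp add: frac_def)
  then show ?thesis using s ccw_dist_circ circ_add_Ints[of "of_int (- floor (s - t))" s] by simp
qed

lemma ccw_dist_pos:
  assumes "cmod v = 1" "cmod w = 1" "w \<noteq> v"
  shows "ccw_dist v w > 0"
proof -
  obtain t where t: "v = circ t" using circ_Arg[OF assms(1)] by blast
  have "ccw_dist v w \<noteq> 0"
  proof
    assume h: "ccw_dist v w = 0"
    have "circ (t + ccw_dist (circ t) w) = w" by (rule circ_add_ccw_dist[OF assms(2)])
    then have "circ t = w" using h t by simp
    then show False using t assms(3) by simp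
  qed
  then show ?thesis using ccw_dist_nonneg[of v w] by linarith
qed

lemma ccw_dist_inj:
  assumes "cmod v = 1" "cmod w = 1" "cmod w' = 1" "ccw_dist v w = ccw_dist v w'"
  shows "w = w'"
proof -
  obtain t where t: "v = circ t" using circ_Arg[OF assms(1)] by blast
  have 1: "circ (t + ccw_dist (circ t) w) = w" by (rule circ_add_ccw_dist[OF assms(2)])
  have 2: "circ (t + ccw_dist (circ t) w') = w'" by (rule circ_add_ccw_dist[OF assms(3)])
  have "ccw_dist (circ t) w = ccw_dist (circ t) w'" using assms(4) t by simp
  then show ?thesis using 1 2 by metis
qed

lemma sin_triple_product:
  fixes x y :: real
  shows "sin (2 * (y - x)) + sin (2 * x) - sin (2 * y) = 4 * sin x * sin y * sin (y - x)"
proof -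
  have e1: "(cos x)^2 = 1 - (sin x)^2" and e2: "(cos y)^2 = 1 - (sin y)^2"
    by (simp_all add: cos_squared_eq)
  show ?thesis unfolding sin_double sin_diff cos_diff using e1 e2 by algebra
qed

lemma cos_sin_cross:
  fixes A B C :: real
  shows "(cos B - cos A) * (sin C - sin A) - (sin B - sin A) * (cos C - cos A)
       = sin (C - B) + sin (B - A) + sin (A - C)"
  unfolding sin_diff by algebra

lemma cross_circ_circ:
  "cross (circ (a + b) - circ a) (circ (a + c) - circ a) =
     4 * sin (pi * b) * sin (pi * c) * sin (pi * (c - b))"
proof -
  define A where "A = 2*pi*a"
  define B where "B = 2*pi*(a+b)"
  define C where "C = 2*pi*(a+c)"
  have e1: "circ a = cis A" "circ (a+b) = cis B" "circ (a+c) = cis C"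
    by (simp_all add: circ_def A_def B_def C_def)
  have "cross (circ (a + b) - circ a) (circ (a + c) - circ a) =
        (cos B - cos A)*(sin C - sin A) - (sin B - sin A)*(cos C - cos A)"
    unfolding e1 cross_altdef by simp
  also have "\<dots> = sin (C-B) + sin (B-A) + sin (A-C)" by (rule cos_sin_cross)
  also have "C - B = 2 * (pi*c - pi*b)" by (simp add: B_def C_def algebra_simps)
  also have "B - A = 2 * (pi*b)" by (simp add: A_def B_def algebra_simps)
  also have "A - C = - (2 * (pi*c))" by (simp add: A_def C_def algebra_simps)
  also have "sin (2 * (pi*c - pi*b)) + sin (2 * (pi*b)) + sin (- (2 * (pi*c))) =
     sin (2 * (pi*c - pi*b)) + sin (2 * (pi*b)) - sin (2 * (pi*c))" by simp
  also have "\<dots> = 4 * sin (pi * b) * sin (pi * c) * sin (pi * c - pi * b)"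
    by (rule sin_triple_product)
  finally show ?thesis by (simp add: right_diff_distrib)
qed

lemma sin_pi_pos: "0 < x \<Longrightarrow> x < 1 \<Longrightarrow> sin (pi * x) > 0"
  by (rule sin_gt_zero) auto

lemma sin_pi_sign:
  assumes "-1 < x" "x < 1"
  shows "(sin (pi * x) > 0 \<longleftrightarrow> x > 0) \<and> (sin (pi * x) = 0 \<longleftrightarrow> x = 0)"
proof (cases "x > 0")
  case True then show ?thesis using sin_pi_pos[of x] assms by auto
next
  case False
  show ?thesis
  proof (cases "x = 0")
    case True then show ?thesis by simp
  next
    case False
    with \<open>\<not> x > 0\<close> have "0 < -x" "-x < 1" using assms by auto
    then have "sin (pi * (-x)) > 0" by (rule sin_pi_pos)
    then show ?thesis using False \<open>\<not> x > 0\<close> by simp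
  qed
qed

lemma cross_sign_ccw_dist:
  assumes "cmod v = 1" "cmod w = 1" "cmod u = 1" "w \<noteq> v" "u \<noteq> v"
  shows "(cross (w - v) (u - v) > 0 \<longleftrightarrow> ccw_dist v w < ccw_dist v u) \<and>
         (cross (w - v) (u - v) = 0 \<longleftrightarrow> ccw_dist v w = ccw_dist v u)"
proof -
  obtain a where a: "v = circ a" using circ_Arg[OF assms(1)] by blast
  define b where "b = ccw_dist v w"
  define c where "c = ccw_dist v u"
  have w: "w = circ (a + b)" using circ_add_ccw_dist[OF assms(2), of a] a b_def by simp
  have u: "u = circ (a + c)" using circ_add_ccw_dist[OF assms(3), of a] a c_def by simp
  have b: "0 < b" "b < 1" using ccw_dist_pos[OF assms(1,2,4)] ccw_dist_less_1 b_def by auto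
  have c: "0 < c" "c < 1" using ccw_dist_pos[OF assms(1,3,5)] ccw_dist_less_1 c_def by auto
  have sb: "sin (pi * b) > 0" using b sin_pi_pos by auto
  have sc: "sin (pi * c) > 0" using c sin_pi_pos by auto
  have e: "cross (w - v) (u - v) = 4 * sin (pi * b) * sin (pi * c) * sin (pi * (c - b))"
    using cross_circ_circ a w u by simp
  have s: "(sin (pi * (c - b)) > 0 \<longleftrightarrow> c - b > 0) \<and> (sin (pi * (c - b)) = 0 \<longleftrightarrow> c - b = 0)"
    by (rule sin_pi_sign) (use b c in auto)
  have pp: "4 * sin (pi * b) * sin (pi * c) > 0" using sb sc by simp
  have f1: "cross (w - v) (u - v) > 0 \<longleftrightarrow> sin (pi * (c - b)) > 0"
    unfolding e using pp by (metis mult_pos_pos zero_less_mult_pos)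
  have f2: "cross (w - v) (u - v) = 0 \<longleftrightarrow> sin (pi * (c - b)) = 0"
    unfolding e using sb sc by simp
  have A: "(cross (w - v) (u - v) > 0) = (b < c)" using f1 s by simp
  have B: "(cross (w - v) (u - v) = 0) = (b = c)" using f2 s by auto
  show ?thesis using A B by (simp only: b_def c_def)
qed

lemma frac_Arg_divide:
  assumes z: "z \<noteq> 0" and "Arg z \<noteq> 0"
  shows "frac (Arg z / (2 * pi)) = Arg (- z) / (2 * pi) + 1/2"
proof -
  have b: "- pi < Arg z" "Arg z \<le> pi" using Arg_bounded by auto
  show ?thesis
  proof (cases "Arg z < 0")
    case True
    have "frac (Arg z / (2 * pi)) = frac (Arg z / (2 * pi) + 1 + of_int (-1))" by simp
    also have "\<dots> = Arg z / (2 * pi) + 1"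
    proof (subst frac_add_of_int_right, subst frac_eq, rule conjI)
      have "Arg z / (2 * pi) > - pi / (2 * pi)" using b(1) by (intro divide_strict_right_mono) auto
      then show "0 \<le> Arg z / (2 * pi) + 1" by simp
      show "Arg z / (2 * pi) + 1 < 1" using True by (simp add: divide_neg_pos)
    qed
    finally show ?thesis using Arg_minus[OF z] True by (simp add: field_simps)
  next
    case False
    have "Arg z < 2 * pi" using b(2) pi_gt_zero by linarith
    then have "frac (Arg z / (2 * pi)) = Arg z / (2 * pi)"
      using False by (subst frac_eq) (simp add: divide_less_eq)
    then show ?thesis using Arg_minus[OF z] False \<open>Arg z \<noteq> 0\<close> by (simp add: field_simps)
  qed
qed

text \<open>The cut of Arg (- w / v) lies at w = v, so this form shows that ccw_dist is continuous
off the diagonal.\<close>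

lemma ccw_dist_Arg:
  assumes "cmod v = 1" "cmod w = 1" "w \<noteq> v"
  shows "ccw_dist v w = Arg (- (w / v)) / (2 * pi) + 1/2"
proof -
  define z where "z = w / v"
  have z: "cmod z = 1" "z \<noteq> 1" using assms by (auto simp: z_def norm_divide)
  then have "z \<noteq> 0" by auto
  have "Arg z \<noteq> 0"
  proof
    assume "Arg z = 0"
    then have "z = 1" using cis_Arg[OF \<open>z \<noteq> 0\<close>] z(1) by (simp add: sgn_div_norm)
    with z(2) show False ..
  qed
  then show ?thesis
    unfolding ccw_dist_def z_def[symmetric] by (rule frac_Arg_divide[OF \<open>z \<noteq> 0\<close>])
qed

lemma continuous_on_circ: "continuous_on S circ"
  unfolding circ_def by (intro continuous_intros)

lemma continuous_on_ccw_dist_other_end: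
  assumes X: "cmod X < 1"
  shows "continuous_on UNIV (\<lambda>x. ccw_dist (circ x) (other_end X (circ x)))"
proof -
  have cs: "continuous_on UNIV (\<lambda>x. other_end X (circ x))"
    by (rule continuous_on_compose2[OF continuous_on_other_end[OF X] continuous_on_circ])
      (auto simp: S1_iff)
  have c2: "continuous_on UNIV (\<lambda>x. - (other_end X (circ x) / circ x))"
    by (intro continuous_intros cs continuous_on_circ) (metis cmod_circ norm_zero zero_neq_one)
  have np: "- (other_end X (circ x) / circ x) \<notin> \<real>\<^sub>\<le>\<^sub>0" for x
  proof
    assume h: "- (other_end X (circ x) / circ x) \<in> \<real>\<^sub>\<le>\<^sub>0"
    define z where "z = other_end X (circ x) / circ x"
    have zu: "cmod z = 1" using cmod_other_end[OF X cmod_circ] by (simp add: z_def norm_divide)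
    have "Re z \<ge> 0" "Im z = 0" using h by (auto simp: complex_nonpos_Reals_iff z_def)
    then have "z = of_real (Re z)" by (simp add: complex_eq_iff)
    moreover have "\<bar>Re z\<bar> = 1" using zu \<open>Im z = 0\<close> by (simp add: cmod_def)
    ultimately have "z = 1" using \<open>Re z \<ge> 0\<close> by simp
    then have "other_end X (circ x) = circ x" unfolding z_def
      by (metis cmod_circ divide_self_if norm_zero zero_neq_one nonzero_divide_eq_eq mult_1)
    then show False using other_end_neq[OF X cmod_circ] by simp
  qed
  have "continuous_on UNIV (\<lambda>x. Arg (- (other_end X (circ x) / circ x)) / (2 * pi) + 1/2)"
    by (intro continuous_intros c2 np) auto
  then show ?thesis
    using ccw_dist_Arg[OF cmod_circ cmod_other_end[OF X cmod_circ] other_end_neq[OF X cmod_circ]]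
    by simp
qed

lemma cross_sign_other_end:
  assumes "cmod v = 1" "cmod w = 1" "w \<noteq> v" "cmod Y < 1"
  shows "(cross (w - v) (Y - v) > 0 \<longleftrightarrow> ccw_dist v w < ccw_dist v (other_end Y v)) \<and>
         (cross (w - v) (Y - v) = 0 \<longleftrightarrow> ccw_dist v w = ccw_dist v (other_end Y v))"
proof -
  have pos: "1 / chord_param Y v > 0" using chord_param_gt_1[OF assms(4,1)] by simp
  have e: "cross (w - v) (Y - v) = (1 / chord_param Y v) * cross (w - v) (other_end Y v - v)"
    by (simp only: other_end_chord[OF assms(4,1)] cross_scale_right)
  show ?thesis
    using cross_sign_ccw_dist[OF assms(1,2) cmod_other_end[OF assms(4,1)] assms(3)
        other_end_neq[OF assms(4,1)]] pos
    unfolding e by (simp add: zero_less_divide_iff)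
qed

section \<open>The map \<psi> of a triangle and its lift\<close>

definition first_gap :: "complex \<Rightarrow> complex \<Rightarrow> complex \<Rightarrow> complex \<Rightarrow> real" where
  "first_gap P Q R v =
     min (min (ccw_dist v (other_end P v)) (ccw_dist v (other_end Q v))) (ccw_dist v (other_end R v))"

lemma first_gap_le: "X \<in> {P, Q, R} \<Longrightarrow> first_gap P Q R v \<le> ccw_dist v (other_end X v)"
  unfolding first_gap_def by auto

lemma first_gap_attained:
  obtains X where "X \<in> {P, Q, R}" "ccw_dist v (other_end X v) = first_gap P Q R v"
  unfolding first_gap_def by (metis insertCI min_def)

lemma supports_first_other_end:
  assumes "cmod P < 1" "cmod Q < 1" "cmod R < 1" "cmod v = 1"
    and X: "X \<in> {P, Q, R}" "ccw_dist v (other_end X v) = first_gap P Q R v"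
  shows "supports v (other_end X v) (convex hull {P, Q, R})"
proof -
  let ?w = "other_end X v"
  have "cmod X < 1" using X assms by auto
  then have w: "cmod ?w = 1" "?w \<noteq> v" using cmod_other_end other_end_neq assms(4) by auto
  have side: "Y \<in> {P, Q, R} \<Longrightarrow>
      (cross (?w - v) (Y - v) > 0 \<longleftrightarrow> ccw_dist v ?w < ccw_dist v (other_end Y v)) \<and>
      (cross (?w - v) (Y - v) = 0 \<longleftrightarrow> ccw_dist v ?w = ccw_dist v (other_end Y v))" for Y
    using cross_sign_other_end[OF assms(4) w] assms(1-3) by blast
  have "cross (?w - v) (Y - v) \<ge> 0" if "Y \<in> {P, Q, R}" for Y
    using side[OF that] first_gap_le[OF that, of v] X(2) by force
  then have "\<forall>z\<in>convex hull {P, Q, R}. cross (?w - v) (z - v) \<ge> 0"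
    using cross_convex_hull_3_nonneg by blast
  moreover have "cross (?w - v) (X - v) = 0" using side[OF X(1)] by blast
  ultimately show ?thesis
    unfolding supports_def using X(1) hull_subset[of "{P, Q, R}" convex] by blast
qed

lemma first_gap_le_supports:
  assumes "cmod P < 1" "cmod Q < 1" "cmod R < 1" "cmod v = 1"
    and w: "w \<in> S1" "w \<noteq> v" "supports v w (convex hull {P, Q, R})"
  shows "first_gap P Q R v \<le> ccw_dist v w"
proof (rule ccontr)
  assume less: "\<not> first_gap P Q R v \<le> ccw_dist v w"
  have "cross (w - v) (Y - v) > 0" if "Y \<in> {P, Q, R}" for Y
    using cross_sign_other_end[OF assms(4) _ w(2), of Y] w(1) assms(1-3) that
      first_gap_le[OF that, of v] less
    by (auto simp: S1_iff)
  then have "\<forall>z\<in>convex hull {P, Q, R}. cross (w - v) (z - v) > 0"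
    using cross_convex_hull_3_pos by blast
  then show False using w(3) unfolding supports_def by force
qed

lemma psi_tri_triangle:
  assumes "cmod P < 1" "cmod Q < 1" "cmod R < 1" and v: "cmod v = 1"
  shows "cmod (psi_tri (convex hull {P, Q, R}) v) = 1 \<and>
         ccw_dist v (psi_tri (convex hull {P, Q, R}) v) = first_gap P Q R v"
proof -
  let ?T = "convex hull {P, Q, R}"
  obtain X where X: "X \<in> {P, Q, R}" "ccw_dist v (other_end X v) = first_gap P Q R v"
    by (rule first_gap_attained)
  let ?w = "other_end X v"
  have "cmod X < 1" using X assms by auto
  then have w: "?w \<in> S1" "?w \<noteq> v" using cmod_other_end other_end_neq v by (auto simp: S1_iff)
  have first: "?w \<in> S1 \<and> ?w \<noteq> v \<and> supports v ?w ?T \<and>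
      (\<forall>w'. w' \<in> S1 \<and> w' \<noteq> v \<and> supports v w' ?T \<longrightarrow> ccw_dist v ?w \<le> ccw_dist v w')"
    using w supports_first_other_end[OF assms X] first_gap_le_supports[OF assms] X(2) by simp
  have "psi_tri ?T v = ?w"
    unfolding psi_tri_def
  proof (rule the_equality)
    fix u assume u: "u \<in> S1 \<and> u \<noteq> v \<and> supports v u ?T \<and>
      (\<forall>w'. w' \<in> S1 \<and> w' \<noteq> v \<and> supports v w' ?T \<longrightarrow> ccw_dist v u \<le> ccw_dist v w')"
    then have "ccw_dist v u = ccw_dist v ?w" using first by (meson order_antisym)
    then show "u = ?w" using ccw_dist_inj[OF v] u w by (auto simp: S1_iff)
  qed (rule first)
  then show ?thesis using w X(2) by (simp add: S1_iff)
qed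

definition end_lift :: "complex \<Rightarrow> real \<Rightarrow> real" where
  "end_lift X x = x + ccw_dist (circ x) (other_end X (circ x))"

definition tri_lift :: "complex \<Rightarrow> complex \<Rightarrow> complex \<Rightarrow> real \<Rightarrow> real" where
  "tri_lift P Q R x = x + first_gap P Q R (circ x)"

lemma tri_lift_min: "tri_lift P Q R x = min (min (end_lift P x) (end_lift Q x)) (end_lift R x)"
  by (simp add: tri_lift_def first_gap_def end_lift_def min_add_distrib_left)

lemma tri_lift_le_end_lift: "X \<in> {P, Q, R} \<Longrightarrow> tri_lift P Q R x \<le> end_lift X x"
  unfolding tri_lift_min by auto

lemma continuous_on_end_lift: "cmod X < 1 \<Longrightarrow> continuous_on UNIV (end_lift X)"
  unfolding end_lift_def by (intro continuous_intros continuous_on_ccw_dist_other_end)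

lemma end_lift_add_int: "end_lift X (x + of_int n) = end_lift X x + of_int n"
  unfolding end_lift_def using circ_add_Ints[of "of_int n" x] by simp

lemma circ_end_lift: "cmod X < 1 \<Longrightarrow> circ (end_lift X x) = other_end X (circ x)"
  unfolding end_lift_def by (rule circ_add_ccw_dist[OF cmod_other_end[OF _ cmod_circ]])

lemma inj_end_lift:
  assumes X: "cmod X < 1"
  shows "inj (end_lift X)"
proof
  fix a b assume e: "end_lift X a = end_lift X b"
  then have "other_end X (other_end X (circ a)) = other_end X (other_end X (circ b))"
    using circ_end_lift[OF X, of a] circ_end_lift[OF X, of b] by simp
  then have "circ a = circ b" using other_end_involution[OF X cmod_circ] by simp
  then obtain n :: int where n: "a = b + of_int n" using circ_eq_iff by blast
  then have "end_lift X a = end_lift X b + of_int n" using end_lift_add_int by simp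
  then show "a = b" using e n by simp
qed

text \<open>If f b \<le> f a for some a < b, then f (a + s) = f a for some s between b - a and 1 by the
intermediate value theorem, contradicting injectivity.\<close>

lemma strict_mono_if_inj_add_1:
  fixes f :: "real \<Rightarrow> real"
  assumes cont: "continuous_on UNIV f" and "inj f" and add_1: "\<And>x. f (x + 1) = f x + 1"
  shows "strict_mono f"
proof
  fix a b :: real assume ab: "a < b"
  show "f a < f b"
  proof (rule ccontr)
    assume "\<not> f a < f b"
    define k where "k s = f (a + s) - f a" for s
    have ck: "continuous_on UNIV k" unfolding k_def
      by (intro continuous_intros continuous_on_compose2[OF cont]) auto
    have k1: "k 1 = 1" and kd: "k (b - a) \<le> 0"
      using add_1[of a] \<open>\<not> f a < f b\<close> by (simp_all add: k_def)
    obtain s where "min 1 (b - a) \<le> s" "k s = 0"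
    proof (cases "b - a \<le> 1")
      case True
      then show ?thesis using IVT'[of k "b - a" 0 1] kd k1 continuous_on_subset[OF ck] that by auto
    next
      case False
      then show ?thesis using IVT2'[of k "b - a" 0 1] kd k1 continuous_on_subset[OF ck] that by auto
    qed
    then have "s > 0" "f (a + s) = f a" using ab by (auto simp: k_def)
    then show False using \<open>inj f\<close> by (metis add_cancel_left_right injD less_irrefl)
  qed
qed

lemma strict_mono_end_lift: "cmod X < 1 \<Longrightarrow> strict_mono (end_lift X)"
  by (rule strict_mono_if_inj_add_1[OF continuous_on_end_lift inj_end_lift])
    (use end_lift_add_int[of X _ 1] in simp_all)

lemma strict_mono_tri_lift:
  assumes "cmod P < 1" "cmod Q < 1" "cmod R < 1"
  shows "strict_mono (tri_lift P Q R)"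
  using strict_mono_end_lift[OF assms(1)] strict_mono_end_lift[OF assms(2)]
    strict_mono_end_lift[OF assms(3)]
  unfolding strict_mono_def tri_lift_min by (simp add: min_less_iff_disj min_less_iff_conj)

text \<open>f - g is continuous and integer-valued, hence constant.\<close>

lemma lift_eq_if_circ_eq:
  fixes f g :: "real \<Rightarrow> real"
  assumes "continuous_on UNIV f" "continuous_on UNIV g"
    and circ_eq: "\<And>x. circ (f x) = circ (g x)" and "\<bar>f 0 - g 0\<bar> < 1"
  shows "f = g"
proof -
  have int: "\<exists>n::int. f x - g x = of_int n" for x
    using circ_eq[of x] by (auto simp: circ_eq_iff)
  have cd: "continuous_on UNIV (\<lambda>x. f x - g x)" using assms by (intro continuous_intros)
  have "(\<lambda>x. f x - g x) constant_on UNIV"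
  proof (rule continuous_discrete_range_constant[OF connected_UNIV cd])
    fix x :: real
    show "\<exists>e>0. \<forall>y. y \<in> UNIV \<and> f y - g y \<noteq> f x - g x \<longrightarrow> e \<le> norm (f y - g y - (f x - g x))"
    proof (intro exI[of _ 1] conjI allI impI)
      fix y assume "y \<in> UNIV \<and> f y - g y \<noteq> f x - g x"
      moreover obtain n :: int where "f x - g x = of_int n" using int by blast
      moreover obtain m :: int where "f y - g y = of_int m" using int by blast
      ultimately have "1 \<le> \<bar>m - n\<bar>" by auto
      then have "1 \<le> \<bar>of_int m - of_int n :: real\<bar>"
        by (metis of_int_abs of_int_diff of_int_le_iff of_int_1)
      then show "1 \<le> norm (f y - g y - (f x - g x))"
        using \<open>f x - g x = of_int n\<close> \<open>f y - g y = of_int m\<close> by simp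
    qed simp
  qed
  then obtain c where c: "\<And>x. f x - g x = c" unfolding constant_on_def by blast
  obtain n :: int where "f 0 - g 0 = of_int n" using int by blast
  then have "c = 0" using c[of 0] assms(4) by auto
  then show ?thesis using c by (simp add: fun_eq_iff)
qed

lemma psi_lift_triangle:
  assumes P: "cmod P < 1" and Q: "cmod Q < 1" and R: "cmod R < 1"
  shows "psi_lift (convex hull {P, Q, R}) = tri_lift P Q R"
  unfolding psi_lift_def
proof (rule the_equality)
  let ?T = "convex hull {P, Q, R}"
  have cont: "continuous_on UNIV (tri_lift P Q R)" unfolding tri_lift_min
    by (intro continuous_intros continuous_on_end_lift P Q R)
  have circ_eq: "circ (tri_lift P Q R x) = psi_tri ?T (circ x)" for x
    using psi_tri_triangle[OF P Q R cmod_circ, of x] circ_add_ccw_dist[of "psi_tri ?T (circ x)" x]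
    unfolding tri_lift_def by metis
  have "0 < first_gap P Q R (circ 0)" "first_gap P Q R (circ 0) < 1"
    unfolding first_gap_def using P Q R ccw_dist_less_1
      ccw_dist_pos[OF cmod_circ cmod_other_end[OF _ cmod_circ] other_end_neq[OF _ cmod_circ]]
    by (simp_all add: min_def)
  then have F0: "0 < tri_lift P Q R 0" "tri_lift P Q R 0 < 1" by (simp_all add: tri_lift_def)
  show "continuous_on UNIV (tri_lift P Q R) \<and> (\<forall>x. circ (tri_lift P Q R x) = psi_tri ?T (circ x))
      \<and> 0 < tri_lift P Q R 0 \<and> tri_lift P Q R 0 < 1"
    using cont circ_eq F0 by blast
  fix g assume "continuous_on UNIV g \<and> (\<forall>x. circ (g x) = psi_tri ?T (circ x)) \<and> 0 < g 0 \<and> g 0 < 1"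
  then show "g = tri_lift P Q R"
    using lift_eq_if_circ_eq[of g "tri_lift P Q R"] cont circ_eq F0 by auto
qed

section \<open>Three steps of \<psi> make less than a full turn\<close>

lemma ccw_dist_other_end_less:
  assumes P: "cmod P < 1" and Q: "cmod Q < 1" and c: "cmod c = 1"
    and right: "cross (Q - P) (c - P) < 0"
  shows "ccw_dist c (other_end Q c) < ccw_dist c (other_end P c)"
proof -
  have "cross (other_end Q c - c) (other_end P c - c)
      = - (chord_param Q c * chord_param P c * cross (Q - P) (c - P))"
    unfolding other_end_minus
    by (simp add: cross_scale_left cross_scale_right cross_altdef algebra_simps)
  also have "\<dots> > 0"
    using chord_param_gt_1[OF Q c] chord_param_gt_1[OF P c] right by (simp add: mult_pos_neg)
  finally show ?thesis
    using cross_sign_ccw_dist[OF c cmod_other_end[OF Q c] cmod_other_end[OF P c]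
        other_end_neq[OF Q c] other_end_neq[OF P c]] by blast
qed

lemma ccw_dist_circ_add:
  assumes "a \<le> b" "b < a + 1"
  shows "ccw_dist (circ (x + a)) (circ (x + b)) = b - a"
  using assms by (simp add: ccw_dist_circ frac_eq)

lemma end_lift_circ_eq: "circ x = c \<Longrightarrow> end_lift X x = x + ccw_dist c (other_end X c)"
  by (simp add: end_lift_def)

lemma tri_lift_power_3_less:
  assumes P: "cmod P < 1" and Q: "cmod Q < 1" and R: "cmod R < 1" and c: "cmod c = 1"
    and right_PQ: "cross (Q - P) (c - P) < 0"
    and right_v: "cross (other_end P c - other_end Q c) (R - other_end Q c) < 0"
    and x: "circ x = c"
  shows "(tri_lift P Q R ^^ 3) x < x + 1"
proof -
  define F where "F = tri_lift P Q R"
  define v1 where "v1 = other_end Q c"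
  define v2 where "v2 = other_end P c"
  define al where "al = ccw_dist c v1"
  define be where "be = ccw_dist c v2"
  have v1: "cmod v1 = 1" "v1 \<noteq> c" unfolding v1_def using cmod_other_end other_end_neq Q c by auto
  have v2: "cmod v2 = 1" unfolding v2_def using cmod_other_end P c by auto
  have al_be: "0 < al" "al < be" "be < 1"
    using ccw_dist_pos[OF c v1] ccw_dist_other_end_less[OF P Q c right_PQ] ccw_dist_less_1
    by (simp_all add: al_def be_def v1_def v2_def)
  have circ_v1: "circ (x + al) = v1" and circ_v2: "circ (x + be) = v2"
    using circ_add_ccw_dist v1 v2 x by (auto simp: al_def be_def)
  have mono: "strict_mono F" unfolding F_def by (rule strict_mono_tri_lift[OF P Q R])
  have step_Q: "F x \<le> x + al"
    using tri_lift_le_end_lift[of Q P Q R x] end_lift_circ_eq[OF x] by (simp add: F_def al_def v1_def)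
  have step_R: "F (x + al) < x + be"
  proof -
    have "ccw_dist v1 v2 = be - al"
      using ccw_dist_circ_add[of al be x] al_be circ_v1 circ_v2 by simp
    moreover have "v2 \<noteq> v1" using al_be by (auto simp: al_def be_def)
    moreover have "cross (v2 - v1) (R - v1) < 0" using right_v by (simp add: v1_def v2_def)
    ultimately have "ccw_dist v1 (other_end R v1) < be - al"
      using cross_sign_other_end[OF v1(1) v2 _ R] by fastforce
    then show ?thesis
      using tri_lift_le_end_lift[of R P Q R "x + al"] end_lift_circ_eq[OF circ_v1] by (simp add: F_def)
  qed
  have step_P: "F (x + be) \<le> x + 1"
  proof -
    have "circ (x + 1) = c" using x circ_add_Ints[of 1 x] by simp
    then have "ccw_dist v2 c = 1 - be"
      using ccw_dist_circ_add[of be 1 x] al_be circ_v2 by simp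
    then show ?thesis
      using tri_lift_le_end_lift[of P P Q R "x + be"] end_lift_circ_eq[OF circ_v2]
        other_end_involution[OF P c] by (simp add: F_def v2_def)
  qed
  have "F (F x) < x + be"
    using strict_mono_less_eq[OF mono] step_Q step_R by (meson le_less_trans)
  then have "F (F (F x)) < x + 1"
    using strict_mono_less[OF mono] step_P by (meson less_le_trans)
  then show ?thesis unfolding F_def by (simp add: numeral_3_eq_3)
qed

definition three_step_witness :: "complex \<Rightarrow> complex \<Rightarrow> complex \<Rightarrow> bool" where
  "three_step_witness P Q R \<longleftrightarrow> (\<exists>c. cmod c = 1 \<and> cross (Q - P) (c - P) < 0 \<and>
     cross (other_end P c - other_end Q c) (R - other_end Q c) < 0)"

lemma psi_lift_power_3_less:
  assumes "cmod P < 1" "cmod Q < 1" "cmod R < 1" and "three_step_witness P Q R"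
  shows "\<exists>w\<in>S1. \<forall>w'. circ w' = w \<longrightarrow> (psi_lift (convex hull {P, Q, R}) ^^ 3) w' < w' + 1"
proof -
  obtain c where c: "cmod c = 1" "cross (Q - P) (c - P) < 0"
    "cross (other_end P c - other_end Q c) (R - other_end Q c) < 0"
    using assms(4) unfolding three_step_witness_def by blast
  show ?thesis
    unfolding psi_lift_triangle[OF assms(1-3)]
    using tri_lift_power_3_less[OF assms(1-3) c] c(1) S1_iff by blast
qed

section \<open>The Klein distance\<close>

definition cr_dist :: "complex \<Rightarrow> complex \<Rightarrow> complex \<Rightarrow> complex \<Rightarrow> real" where
  "cr_dist a b P Q = \<bar>ln ((cmod (Q - a) * cmod (P - b)) / (cmod (P - a) * cmod (Q - b)))\<bar> / 2"

definition chord_through :: "complex \<Rightarrow> complex \<Rightarrow> complex \<Rightarrow> complex \<Rightarrow> bool" where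
  "chord_through P Q a b \<longleftrightarrow> a \<in> S1 \<and> b \<in> S1 \<and> a \<noteq> b \<and> {P, Q} \<subseteq> affine hull {a, b}"

lemma cr_dist_param:
  assumes "cmod a = 1" "cmod b = 1" "a \<noteq> b"
    and P: "P = a + of_real p * (b - a)" and Q: "Q = a + of_real q * (b - a)"
    and p: "0 < p" "p < 1" and q: "0 < q" "q < 1"
  shows "cr_dist a b P Q = \<bar>ln (q * (1 - p) / (p * (1 - q)))\<bar> / 2"
proof -
  define L where "L = cmod (b - a)"
  have L: "L > 0" using assms(3) L_def by simp
  have 1: "cmod (Q - a) = q * L" using Q q by (simp add: L_def norm_mult)
  have 2: "cmod (P - b) = (1 - p) * L"
  proof -
    have "P - b = of_real (p - 1) * (b - a)" using P by (simp add: algebra_simps)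
    then have "cmod (P - b) = \<bar>p - 1\<bar> * L" unfolding L_def by (metis norm_mult norm_of_real)
    then show ?thesis using p by simp
  qed
  have 3: "cmod (P - a) = p * L" using P p by (simp add: L_def norm_mult)
  have 4: "cmod (Q - b) = (1 - q) * L"
  proof -
    have "Q - b = of_real (q - 1) * (b - a)" using Q by (simp add: algebra_simps)
    then have "cmod (Q - b) = \<bar>q - 1\<bar> * L" unfolding L_def by (metis norm_mult norm_of_real)
    then show ?thesis using q by simp
  qed
  have "(q * L * ((1 - p) * L)) / (p * L * ((1 - q) * L))
      = (q * (1 - p) * (L * L)) / (p * (1 - q) * (L * L))"
    by (simp add: algebra_simps)
  also have "\<dots> = q * (1 - p) / (p * (1 - q))"
    by (rule mult_divide_mult_cancel_right) (use L in simp)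
  finally have "(q * L * ((1 - p) * L)) / (p * L * ((1 - q) * L)) = q * (1 - p) / (p * (1 - q))" .
  then show ?thesis unfolding cr_dist_def 1 2 3 4 by simp
qed

lemma cr_dist_swap:
  assumes "P \<noteq> a" "P \<noteq> b" "Q \<noteq> a" "Q \<noteq> b"
  shows "cr_dist b a P Q = cr_dist a b P Q"
proof -
  define X where "X = (cmod (Q - a) * cmod (P - b)) / (cmod (P - a) * cmod (Q - b))"
  have X: "X > 0" using assms unfolding X_def by simp
  have "(cmod (Q - b) * cmod (P - a)) / (cmod (P - b) * cmod (Q - a)) = inverse X"
    unfolding X_def by (simp add: field_simps)
  then show ?thesis unfolding cr_dist_def X_def[symmetric] using X by (simp add: ln_inverse)
qed

lemma chord_through_swap: "chord_through P Q a b \<Longrightarrow> chord_through P Q b a"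
  unfolding chord_through_def by (auto simp: insert_commute)

lemma chord_through_param:
  assumes "chord_through P Q a b"
  shows "\<exists>p q. P = a + of_real p * (b - a) \<and> Q = a + of_real q * (b - a)"
proof -
  have "P \<in> affine hull {a, b}" "Q \<in> affine hull {a, b}" using assms chord_through_def by auto
  then show ?thesis unfolding affine_hull_2_param by blast
qed

lemma chord_through_end_unique:
  assumes ab: "chord_through P Q a b" and cd: "chord_through P Q c d" and PQ: "P \<noteq> Q"
  shows "c \<in> {a, b}"
proof -
  obtain p q where P: "P = c + of_real p * (d - c)" and Q: "Q = c + of_real q * (d - c)"
    using chord_through_param[OF cd] by blast
  with PQ have "p - q \<noteq> 0" by auto
  have "Q - P = of_real (q - p) * (d - c)" unfolding P Q by (simp add: algebra_simps)
  then have "of_real (p / (p - q)) * (Q - P) = of_real (p / (p - q) * (q - p)) * (d - c)"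
    by (simp add: mult.assoc)
  also have "p / (p - q) * (q - p) = - p" using \<open>p - q \<noteq> 0\<close> by (simp add: field_simps)
  finally have "c = P + of_real (p / (p - q)) * (Q - P)" using P by simp
  then have "c \<in> affine hull {P, Q}" unfolding affine_hull_2_param by blast
  moreover have "affine hull {P, Q} \<subseteq> affine hull {a, b}"
    using ab unfolding chord_through_def by (intro hull_minimal) (auto simp: affine_affine_hull)
  ultimately have "c \<in> affine hull {a, b}" by blast
  then obtain l where "c = a + of_real l * (b - a)" unfolding affine_hull_2_param by blast
  moreover have "cmod a = 1" "cmod b = 1" "a \<noteq> b" "cmod c = 1"
    using ab cd unfolding chord_through_def S1_iff by auto
  ultimately have "l = 0 \<or> l = 1" using chord_point_on_circle by metis
  then show ?thesis using \<open>c = a + of_real l * (b - a)\<close> by auto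
qed

lemma ray_meets_circle:
  assumes P: "cmod P < 1" and d: "d \<noteq> 0"
  obtains l where "l > 0" "cmod (P + of_real l * d) = 1"
proof -
  define g where "g l = cmod (P + of_real l * d)" for l :: real
  have cont: "continuous_on {0 .. 2 / cmod d} g" unfolding g_def by (intro continuous_intros)
  have "cmod (of_real (2 / cmod d) * d) = \<bar>2 / cmod d\<bar> * cmod d"
    by (simp only: norm_mult norm_of_real)
  then have "cmod (of_real (2 / cmod d) * d) = 2" using d by simp
  then have "2 - cmod P \<le> g (2 / cmod d)" unfolding g_def
    by (metis norm_diff_ineq add.commute add_diff_cancel_left' norm_minus_commute)
  then obtain l where "0 \<le> l" "g l = 1"
    using IVT'[of g 0 1 "2 / cmod d"] cont P d by (auto simp: g_def)
  moreover have "l \<noteq> 0" using \<open>g l = 1\<close> P by (auto simp: g_def)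
  ultimately show ?thesis using that[of l] by (simp add: g_def)
qed

lemma chord_through_exists:
  assumes P: "cmod P < 1" and Q: "cmod Q < 1" and PQ: "P \<noteq> Q"
  shows "\<exists>a b. chord_through P Q a b"
proof -
  obtain l where l: "l > 0" "cmod (P + of_real l * (Q - P)) = 1"
    using ray_meets_circle[OF P, of "Q - P"] PQ by auto
  define a where "a = P + of_real l * (Q - P)"
  define b where "b = other_end P a"
  have a: "cmod a = 1" using l(2) a_def by simp
  have "P = a + of_real (1 / chord_param P a) * (b - a)"
    using other_end_chord[OF P a] b_def by (simp add: algebra_simps)
  then have "P \<in> affine hull {a, b}" unfolding affine_hull_2_param by blast
  moreover have "Q = P + of_real (1 / l) * (a - P)" using l(1) by (simp add: a_def)
  then have "Q \<in> affine hull {P, a}" unfolding affine_hull_2_param by blast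
  ultimately have "Q \<in> affine hull {a, b}"
    using hull_minimal[of "{P, a}" "affine hull {a, b}" affine]
    by (auto simp: affine_affine_hull hull_inc)
  with \<open>P \<in> affine hull {a, b}\<close> have "chord_through P Q a b"
    unfolding chord_through_def S1_iff b_def using a cmod_other_end[OF P a] other_end_neq[OF P a]
    by auto
  then show ?thesis by blast
qed

lemma chord_through_chord_ends:
  assumes "chord_through P Q a b"
  shows "case chord_ends P Q of (v1, v2) \<Rightarrow> chord_through P Q v1 v2"
proof -
  have "\<exists>x. case x of (v1, v2) \<Rightarrow> v1 \<in> S1 \<and> v2 \<in> S1 \<and> v1 \<noteq> v2 \<and> {P, Q} \<subseteq> affine hull {v1, v2}"
    using assms unfolding chord_through_def by (intro exI[of _ "(a, b)"]) simp
  then show ?thesis unfolding chord_ends_def chord_through_def by (rule someI_ex)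
qed

lemma dprime_eq_cr_dist:
  assumes P: "cmod P < 1" and Q: "cmod Q < 1" and PQ: "P \<noteq> Q" and ab: "chord_through P Q a b"
  shows "dprime P Q = cr_dist a b P Q"
proof -
  obtain v1 v2 where ends: "chord_ends P Q = (v1, v2)" by (cases "chord_ends P Q") auto
  then have v: "chord_through P Q v1 v2" using chord_through_chord_ends[OF ab] by simp
  have "v1 \<in> {a, b}" "v2 \<in> {a, b}" "v1 \<noteq> v2"
    using chord_through_end_unique[OF ab v PQ] chord_through_end_unique[OF ab chord_through_swap[OF v] PQ]
      v unfolding chord_through_def by auto
  moreover have "P \<noteq> a" "P \<noteq> b" "Q \<noteq> a" "Q \<noteq> b"
    using ab P Q unfolding chord_through_def S1_iff by auto
  ultimately show ?thesis
    unfolding dprime_def ends cr_dist_def[symmetric] using cr_dist_swap by auto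
qed

lemma dprime_chord_param:
  assumes ab: "cmod a = 1" "cmod b = 1" "a \<noteq> b"
    and P: "P = a + of_real p * (b - a)" and Q: "Q = a + of_real q * (b - a)"
    and p: "0 < p" "p < 1" and q: "0 < q" "q < 1" and "p \<noteq> q"
  shows "dprime P Q = \<bar>ln (q * (1 - p) / (p * (1 - q)))\<bar> / 2"
proof -
  have in_disk: "cmod (a + of_real l * (b - a)) < 1" if "0 < l" "l < 1" for l
  proof -
    have "(cmod (a + of_real l * (b - a)))^2 < 1"
      using cmod_chord_power2[OF ab(1,2), of l] that ab(3) by simp
    then show ?thesis by (metis abs_norm_cancel abs_square_less_1)
  qed
  have "P - Q = of_real (p - q) * (b - a)" unfolding P Q by (simp add: algebra_simps)
  then have "P \<noteq> Q" using \<open>p \<noteq> q\<close> ab(3) by auto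
  moreover have "P \<in> affine hull {a, b}" "Q \<in> affine hull {a, b}"
    unfolding affine_hull_2_param using P Q by blast+
  then have "chord_through P Q a b" using ab by (simp add: chord_through_def S1_iff)
  ultimately show ?thesis
    using dprime_eq_cr_dist cr_dist_param[OF ab P Q p q] in_disk p q P Q by simp
qed

lemma dprime_commute:
  assumes P: "cmod P < 1" and Q: "cmod Q < 1" and PQ: "P \<noteq> Q"
  shows "dprime Q P = dprime P Q"
proof -
  obtain a b where v: "chord_through P Q a b" using chord_through_exists[OF P Q PQ] by blast
  obtain p q where pq: "P = a + of_real p * (b - a)" "Q = a + of_real q * (b - a)"
    using chord_through_param[OF v] by blast
  have ab: "cmod a = 1" "cmod b = 1" "a \<noteq> b" using v unfolding chord_through_def S1_iff by auto
  have p: "0 < p" "p < 1" using chord_point_in_disk[OF ab, of p] pq P by auto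
  have q: "0 < q" "q < 1" using chord_point_in_disk[OF ab, of q] pq Q by auto
  have "p \<noteq> q" using pq PQ by auto
  have "dprime Q P = \<bar>ln (inverse (q * (1 - p) / (p * (1 - q))))\<bar> / 2"
    using dprime_chord_param[OF ab pq(2,1) q p] \<open>p \<noteq> q\<close> by simp
  also have "\<dots> = dprime P Q"
    using dprime_chord_param[OF ab pq p q \<open>p \<noteq> q\<close>] p q by (subst ln_inverse) auto
  finally show ?thesis .
qed

section \<open>Projective automorphisms of the disk\<close>

definition preserves_disk :: "(complex \<Rightarrow> complex) \<Rightarrow> bool" where
  "preserves_disk K \<longleftrightarrow> (\<forall>z. cmod z < 1 \<longrightarrow> cmod (K z) < 1) \<and> (\<forall>z. cmod z = 1 \<longrightarrow> cmod (K z) = 1)"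

text \<open>Instead of the projective group of the disk we record the properties of its elements that
are used: they preserve orientation, they map a chord onto a chord with a projective change of
parameter (so they preserve cross ratios, hence d'), and they are invertible on the closed disk.\<close>

definition klein_auto :: "(complex \<Rightarrow> complex) \<Rightarrow> bool" where
  "klein_auto K \<longleftrightarrow> preserves_disk K \<and>
    (\<forall>u v w. cmod u \<le> 1 \<longrightarrow> cmod v \<le> 1 \<longrightarrow> cmod w \<le> 1 \<longrightarrow>
       (\<exists>l>0. cross (K v - K u) (K w - K u) = l * cross (v - u) (w - u))) \<and>
    (\<forall>u v. cmod u \<le> 1 \<longrightarrow> cmod v \<le> 1 \<longrightarrow> (\<exists>al>0. \<exists>be>0. \<forall>p. 0 \<le> p \<and> p \<le> 1 \<longrightarrow>
       K (u + of_real p * (v - u)) = K u + of_real (p * be / ((1 - p) * al + p * be)) * (K v - K u))) \<and>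
    (\<exists>K'. preserves_disk K' \<and> (\<forall>z. cmod z \<le> 1 \<longrightarrow> K (K' z) = z \<and> K' (K z) = z))"

lemma klein_auto_disk: "klein_auto K \<Longrightarrow> cmod z < 1 \<Longrightarrow> cmod (K z) < 1"
  by (simp add: klein_auto_def preserves_disk_def)

lemma klein_auto_circle: "klein_auto K \<Longrightarrow> cmod z = 1 \<Longrightarrow> cmod (K z) = 1"
  by (simp add: klein_auto_def preserves_disk_def)

lemma klein_auto_cross:
  "klein_auto K \<Longrightarrow> cmod u \<le> 1 \<Longrightarrow> cmod v \<le> 1 \<Longrightarrow> cmod w \<le> 1 \<Longrightarrow>
    \<exists>l>0. cross (K v - K u) (K w - K u) = l * cross (v - u) (w - u)"
  unfolding klein_auto_def by (elim conjE allE impE) assumption+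

lemma klein_auto_chord:
  "klein_auto K \<Longrightarrow> cmod u \<le> 1 \<Longrightarrow> cmod v \<le> 1 \<Longrightarrow> \<exists>al>0. \<exists>be>0. \<forall>p. 0 \<le> p \<and> p \<le> 1 \<longrightarrow>
    K (u + of_real p * (v - u)) = K u + of_real (p * be / ((1 - p) * al + p * be)) * (K v - K u)"
  unfolding klein_auto_def by (elim conjE allE impE) assumption+

lemma klein_auto_inverse:
  assumes "klein_auto K"
  obtains K' where "\<And>z. cmod z < 1 \<Longrightarrow> cmod (K' z) < 1" "\<And>z. cmod z = 1 \<Longrightarrow> cmod (K' z) = 1"
    "\<And>z. cmod z \<le> 1 \<Longrightarrow> K (K' z) = z" "\<And>z. cmod z \<le> 1 \<Longrightarrow> K' (K z) = z"
proof -
  from assms obtain K' where "preserves_disk K'" "\<forall>z. cmod z \<le> 1 \<longrightarrow> K (K' z) = z \<and> K' (K z) = z"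
    unfolding klein_auto_def by blast
  then show ?thesis using that unfolding preserves_disk_def by blast
qed

lemma klein_auto_inj: "klein_auto K \<Longrightarrow> cmod a \<le> 1 \<Longrightarrow> cmod b \<le> 1 \<Longrightarrow> K a = K b \<Longrightarrow> a = b"
  by (elim klein_auto_inverse) metis

lemma klein_auto_other_end:
  assumes K: "klein_auto K" and X: "cmod X < 1" and c: "cmod c = 1"
  shows "K (other_end X c) = other_end (K X) (K c)"
proof (rule other_end_unique)
  show "cmod (K X) < 1" by (rule klein_auto_disk[OF K X])
  show "cmod (K c) = 1" by (rule klein_auto_circle[OF K c])
  show "cmod (K (other_end X c)) = 1" by (rule klein_auto_circle[OF K cmod_other_end[OF X c]])
  show "K (other_end X c) \<noteq> K c"
    using klein_auto_inj[OF K] cmod_other_end[OF X c] other_end_neq[OF X c] c by force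
  obtain l where "cross (K X - K c) (K (other_end X c) - K c) = l * cross (X - c) (other_end X c - c)"
    using klein_auto_cross[OF K, of c X "other_end X c"] c X cmod_other_end[OF X c] by auto
  then show "cross (K X - K c) (K (other_end X c) - K c) = 0" using cross_other_end by simp
qed

lemma projective_param_cross_ratio:
  fixes al be p q :: real
  assumes al: "al > 0" and be: "be > 0" and p: "0 < p" "p < 1" and q: "0 < q" "q < 1"
  defines "p' \<equiv> p * be / ((1 - p) * al + p * be)" and "q' \<equiv> q * be / ((1 - q) * al + q * be)"
  shows "q' * (1 - p') / (p' * (1 - q')) = q * (1 - p) / (p * (1 - q))"
    and "0 < p' \<and> p' < 1"
proof -
  define Dp where "Dp = (1 - p) * al + p * be"
  define Dq where "Dq = (1 - q) * al + q * be"
  have Dp: "Dp > 0" unfolding Dp_def using al be p by (smt (verit) mult_pos_pos)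
  have Dq: "Dq > 0" unfolding Dq_def using al be q by (smt (verit) mult_pos_pos)
  have p1: "1 - p' = (1 - p) * al / Dp" and q1: "1 - q' = (1 - q) * al / Dq"
    unfolding p'_def q'_def Dp_def[symmetric] Dq_def[symmetric] using Dp Dq
    by (simp_all add: field_simps Dp_def Dq_def)
  have "q' * (1 - p') / (p' * (1 - q'))
      = (q * (1 - p) * (be * al) / (Dp * Dq)) / (p * (1 - q) * (be * al) / (Dp * Dq))"
    unfolding p1 q1 unfolding p'_def q'_def Dp_def[symmetric] Dq_def[symmetric]
    by (simp add: field_simps)
  also have "\<dots> = q * (1 - p) / (p * (1 - q))"
    using Dp Dq al be by simp
  finally show "q' * (1 - p') / (p' * (1 - q')) = q * (1 - p) / (p * (1 - q))" .
  have "p' > 0" unfolding p'_def Dp_def[symmetric] using Dp p be by simp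
  moreover have "1 - p' > 0" unfolding p1 using p al Dp by simp
  ultimately show "0 < p' \<and> p' < 1" by simp
qed

lemma klein_auto_rotate:
  assumes w: "cmod w = 1"
  shows "klein_auto (\<lambda>z. w * z)"
  unfolding klein_auto_def preserves_disk_def
proof (intro conjI allI impI)
  fix z :: complex assume "cmod z < 1" then show "cmod (w * z) < 1" using w by (simp add: norm_mult)
next
  fix z :: complex assume "cmod z = 1" then show "cmod (w * z) = 1" using w by (simp add: norm_mult)
next
  fix u v x :: complex
  have "cross (w * v - w * u) (w * x - w * u) = 1 * cross (v - u) (x - u)"
    using cross_rotate[OF w, of "v - u" "x - u"] by (simp add: right_diff_distrib)
  then show "\<exists>l>0. cross (w * v - w * u) (w * x - w * u) = l * cross (v - u) (x - u)"
    by (intro exI[of _ "1::real"]) simp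
next
  fix u v :: complex
  show "\<exists>al>0. \<exists>be>0. \<forall>p. 0 \<le> p \<and> p \<le> 1 \<longrightarrow>
       w * (u + of_real p * (v - u)) = w * u + of_real (p * be / ((1 - p) * al + p * be)) * (w * v - w * u)"
    by (intro exI[of _ 1] conjI allI impI) (auto simp: algebra_simps)
next
  have wc: "cnj w * w = 1" by (rule cnj_mult_self_eq_1[OF w])
  show "\<exists>K'. ((\<forall>z. cmod z < 1 \<longrightarrow> cmod (K' z) < 1) \<and> (\<forall>z. cmod z = 1 \<longrightarrow> cmod (K' z) = 1)) \<and>
       (\<forall>z. cmod z \<le> 1 \<longrightarrow> w * K' z = z \<and> K' (w * z) = z)"
    by (intro exI[of _ "\<lambda>z. cnj w * z"])
      (auto simp: norm_mult w mult.assoc[symmetric] wc mult.commute[of w "cnj w"])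
qed

text \<open>The projective automorphism of the disk fixing \<plusminus>1 and sending 0 to s.\<close>

definition boost :: "real \<Rightarrow> complex \<Rightarrow> complex" where
  "boost s z = Complex ((Re z + s) / (1 + s * Re z)) (sqrt (1 - s^2) * Im z / (1 + s * Re z))"

lemma boost_norm_algebra:
  fixes x y s m d :: real
  assumes d: "d = 1 + s * x" "d \<noteq> 0" and m: "m^2 = 1 - s^2"
  shows "((x + s) / d)^2 + (m * y / d)^2 - 1 = (1 - s^2) * (x^2 + y^2 - 1) / d^2"
proof -
  have "((x + s) / d)^2 + (m * y / d)^2 - 1 = ((x + s)^2 + m^2 * y^2 - d^2) / d^2"
    using d(2) by (simp add: field_simps power2_eq_square)
  also have "(x + s)^2 + m^2 * y^2 - d^2 = (1 - s^2) * (x^2 + y^2 - 1)"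
    unfolding m d(1) by (simp add: power2_eq_square algebra_simps)
  finally show ?thesis .
qed

lemma boost_inverse_algebra:
  fixes x y s m :: real
  assumes d: "1 + s * x \<noteq> 0" and m: "m^2 = 1 - s^2" and s: "s^2 < 1"
  shows "((x + s) / (1 + s * x) + (- s)) / (1 + (- s) * ((x + s) / (1 + s * x))) = x"
    and "m * (m * y / (1 + s * x)) / (1 + (- s) * ((x + s) / (1 + s * x))) = y"
proof -
  have e: "1 + (- s) * ((x + s) / (1 + s * x)) = (1 - s^2) / (1 + s * x)"
    using d by (simp add: field_simps power2_eq_square)
  have ne: "1 - s^2 \<noteq> 0" using s by simp
  have n: "(x + s) / (1 + s * x) + (- s) = x * (1 - s^2) / (1 + s * x)"
    using d by (simp add: field_simps power2_eq_square)
  show "((x + s) / (1 + s * x) + (- s)) / (1 + (- s) * ((x + s) / (1 + s * x))) = x"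
    unfolding e n using d ne by simp
  have f0: "\<And>dd. dd \<noteq> 0 \<Longrightarrow> m * (m * y / dd) / ((1 - s^2) / dd) = m^2 * y / (1 - s^2)"
    by (simp add: power2_eq_square)
  have f: "m * (m * y / (1 + s * x)) / ((1 - s^2) / (1 + s * x)) = m^2 * y / (1 - s^2)"
    by (rule f0[OF d])
  show "m * (m * y / (1 + s * x)) / (1 + (- s) * ((x + s) / (1 + s * x))) = y"
    unfolding e f m using ne by simp
qed

lemma boost_cross_algebra:
  fixes x1 y1 x2 y2 x3 y3 s m d1 d2 d3 :: real
  assumes d1: "d1 = 1 + s * x1" "d1 \<noteq> 0" and d2: "d2 = 1 + s * x2" "d2 \<noteq> 0"
    and d3: "d3 = 1 + s * x3" "d3 \<noteq> 0"
  shows "((x2 + s) / d2 - (x1 + s) / d1) * (m * y3 / d3 - m * y1 / d1)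
       - (m * y2 / d2 - m * y1 / d1) * ((x3 + s) / d3 - (x1 + s) / d1)
     = m * (1 - s^2) / (d1 * d2 * d3) * ((x2 - x1) * (y3 - y1) - (y2 - y1) * (x3 - x1))"
proof -
  have h1: "(x2 + s) / d2 - (x1 + s) / d1 = (x2 - x1) * (1 - s^2) / (d1 * d2)"
    using d1 d2 by (simp add: field_simps power2_eq_square)
  have h2: "(x3 + s) / d3 - (x1 + s) / d1 = (x3 - x1) * (1 - s^2) / (d1 * d3)"
    using d1 d3 by (simp add: field_simps power2_eq_square)
  have h3: "m * y3 / d3 - m * y1 / d1 = m * (y3 * d1 - y1 * d3) / (d1 * d3)"
    using d1 d3 by (simp add: field_simps)
  have h4: "m * y2 / d2 - m * y1 / d1 = m * (y2 * d1 - y1 * d2) / (d1 * d2)"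
    using d1 d2 by (simp add: field_simps)
  have br: "(x2 - x1) * (y3 * d1 - y1 * d3) - (y2 * d1 - y1 * d2) * (x3 - x1)
      = d1 * ((x2 - x1) * (y3 - y1) - (y2 - y1) * (x3 - x1))"
    unfolding d1(1) d2(1) d3(1) by (simp add: algebra_simps)
  have fc: "\<And>a b c e. a/(d1*d2) * (b/(d1*d3)) - c/(d1*d2) * (e/(d1*d3)) = (a*b - c*e)/(d1*d1*d2*d3)"
    by (simp add: times_divide_times_eq diff_divide_distrib mult_ac)
  have ab: "(x2 - x1) * (1 - s^2) * (m * (y3 * d1 - y1 * d3)) - m * (y2 * d1 - y1 * d2) * ((x3 - x1) * (1 - s^2))
     = (1 - s^2) * m * ((x2 - x1) * (y3 * d1 - y1 * d3) - (y2 * d1 - y1 * d2) * (x3 - x1))"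
    by (simp add: algebra_simps)
  have "((x2 + s) / d2 - (x1 + s) / d1) * (m * y3 / d3 - m * y1 / d1)
       - (m * y2 / d2 - m * y1 / d1) * ((x3 + s) / d3 - (x1 + s) / d1)
      = (1 - s^2) * m * (d1 * ((x2 - x1) * (y3 - y1) - (y2 - y1) * (x3 - x1))) / (d1 * d1 * d2 * d3)"
    unfolding h1 h2 h3 h4 fc ab br by simp
  also have "\<dots> = m * (1 - s^2) / (d1 * d2 * d3) * ((x2 - x1) * (y3 - y1) - (y2 - y1) * (x3 - x1))"
    using d1(2) d2(2) d3(2) by (simp add: field_simps)
  finally show ?thesis .
qed

lemma projective_param_algebra:
  fixes a b du dv p A B :: real
  assumes du: "du > 0" and dv: "dv > 0" and p: "0 \<le> p" "p \<le> 1"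
  defines "D \<equiv> (1 - p) * du + p * dv"
  defines "q \<equiv> p * dv / D"
  shows "((1 - p) * A + p * B) / D = A / du + q * (B / dv - A / du)"
proof -
  have Dp: "D > 0" unfolding D_def using du dv p by (smt (verit) mult_nonneg_nonneg mult_pos_pos)
  have q1: "1 - q = (1 - p) * du / D" unfolding q_def using Dp by (simp add: field_simps D_def)
  have g: "\<And>X Y. X + q * (Y - X) = (1 - q) * X + q * Y" by (simp add: algebra_simps)
  have "A / du + q * (B / dv - A / du) = (1 - q) * (A / du) + q * (B / dv)" by (rule g)
  also have "(1 - q) * (A / du) = (1 - p) * A / D" unfolding q1 using du by simp
  also have "q * (B / dv) = p * B / D" unfolding q_def using dv by simp
  also have "(1 - p) * A / D + p * B / D = ((1 - p) * A + p * B) / D" by (simp add: add_divide_distrib)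
  finally show ?thesis by simp
qed

lemma boost_param_algebra:
  fixes ux uy vx vy s m p :: real
  assumes du: "1 + s * ux > 0" and dv: "1 + s * vx > 0" and p: "0 \<le> p" "p \<le> 1"
  defines "q \<equiv> p * (1 + s * vx) / ((1 - p) * (1 + s * ux) + p * (1 + s * vx))"
  shows "(ux + p * (vx - ux) + s) / (1 + s * (ux + p * (vx - ux))) =
           (ux + s) / (1 + s * ux) + q * ((vx + s) / (1 + s * vx) - (ux + s) / (1 + s * ux))"
    and "m * (uy + p * (vy - uy)) / (1 + s * (ux + p * (vx - ux))) =
           m * uy / (1 + s * ux) + q * (m * vy / (1 + s * vx) - m * uy / (1 + s * ux))"
proof -
  have e: "1 + s * (ux + p * (vx - ux)) = (1 - p) * (1 + s * ux) + p * (1 + s * vx)"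
    by (simp add: algebra_simps)
  have n1: "ux + p * (vx - ux) + s = (1 - p) * (ux + s) + p * (vx + s)" by (simp add: algebra_simps)
  have n2: "m * (uy + p * (vy - uy)) = (1 - p) * (m * uy) + p * (m * vy)" by (simp add: algebra_simps)
  show "(ux + p * (vx - ux) + s) / (1 + s * (ux + p * (vx - ux))) =
           (ux + s) / (1 + s * ux) + q * ((vx + s) / (1 + s * vx) - (ux + s) / (1 + s * ux))"
    unfolding e n1 q_def by (rule projective_param_algebra[OF du dv p])
  show "m * (uy + p * (vy - uy)) / (1 + s * (ux + p * (vx - ux))) =
           m * uy / (1 + s * ux) + q * (m * vy / (1 + s * vx) - m * uy / (1 + s * ux))"
    unfolding e n2 q_def by (rule projective_param_algebra[OF du dv p])
qed

lemma boost_denom_pos: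
  assumes "\<bar>s\<bar> < 1" "cmod z \<le> 1"
  shows "1 + s * Re z > 0"
proof -
  have "\<bar>s\<bar> * \<bar>Re z\<bar> \<le> \<bar>s\<bar> * 1"
    using abs_Re_le_cmod[of z] assms(2) by (intro mult_left_mono) auto
  then have "\<bar>s * Re z\<bar> < 1" using assms(1) by (simp add: abs_mult)
  then show ?thesis by linarith
qed

lemma sqrt_1_minus_square:
  assumes "\<bar>s\<bar> < 1"
  shows "(sqrt (1 - s^2))^2 = 1 - s^2" "sqrt (1 - s^2) > 0" "1 - s^2 > 0"
  using assms by (simp_all add: abs_square_less_1 less_imp_le)

lemma boost_norm:
  assumes s: "\<bar>s\<bar> < 1" and d: "1 + s * Re z \<noteq> 0"
  shows "(Re (boost s z))^2 + (Im (boost s z))^2 - 1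
       = (1 - s^2) * ((Re z)^2 + (Im z)^2 - 1) / (1 + s * Re z)^2"
  unfolding boost_def using boost_norm_algebra[OF refl d sqrt_1_minus_square(1)[OF s]] by simp

lemma cmod_boost:
  assumes s: "\<bar>s\<bar> < 1" and z: "cmod z \<le> 1"
  shows "(cmod z < 1 \<longrightarrow> cmod (boost s z) < 1) \<and> (cmod z = 1 \<longrightarrow> cmod (boost s z) = 1)"
proof -
  have d: "1 + s * Re z > 0" by (rule boost_denom_pos[OF s z])
  have e: "(Re (boost s z))^2 + (Im (boost s z))^2 - 1
      = (1 - s^2) * ((Re z)^2 + (Im z)^2 - 1) / (1 + s * Re z)^2"
    using boost_norm[OF s] d by simp
  show ?thesis
  proof (intro conjI impI)
    assume "cmod z < 1"
    then have "(1 - s^2) * ((Re z)^2 + (Im z)^2 - 1) / (1 + s * Re z)^2 < 0"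
      using sqrt_1_minus_square(3)[OF s] d cmod_less_1_iff
      by (simp add: mult_pos_neg divide_neg_pos)
    then show "cmod (boost s z) < 1" using e cmod_less_1_iff by simp
  next
    assume "cmod z = 1"
    then show "cmod (boost s z) = 1" using e cmod_eq_1_iff by simp
  qed
qed

lemma boost_inverse:
  assumes s: "\<bar>s\<bar> < 1" and d: "1 + s * Re z \<noteq> 0"
  shows "boost (- s) (boost s z) = z"
proof -
  have m: "(sqrt (1 - s^2))^2 = 1 - s^2" and s2: "s^2 < 1"
    using s by (simp_all add: abs_square_less_1 less_imp_le)
  show ?thesis unfolding boost_def
    using boost_inverse_algebra(1)[OF d m s2] boost_inverse_algebra(2)[OF d m s2, of "Im z"]
    by (simp add: complex_eq_iff)
qed

lemma cross_boost:
  assumes s: "\<bar>s\<bar> < 1" and u: "cmod u \<le> 1" and v: "cmod v \<le> 1" and w: "cmod w \<le> 1"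
  shows "\<exists>l>0. cross (boost s v - boost s u) (boost s w - boost s u) = l * cross (v - u) (w - u)"
proof -
  define m where "m = sqrt (1 - s^2)"
  have du: "1 + s * Re u > 0" and dv: "1 + s * Re v > 0" and dw: "1 + s * Re w > 0"
    using boost_denom_pos[OF s] u v w by auto
  have "cross (boost s v - boost s u) (boost s w - boost s u) =
      m * (1 - s^2) / ((1 + s * Re u) * (1 + s * Re v) * (1 + s * Re w)) * cross (v - u) (w - u)"
    unfolding cross_altdef using boost_cross_algebra[OF refl _ refl _ refl, of s "Re u" "Re v" "Re w"]
      du dv dw by (simp add: boost_def m_def)
  moreover have "m * (1 - s^2) / ((1 + s * Re u) * (1 + s * Re v) * (1 + s * Re w)) > 0"
    using sqrt_1_minus_square(2,3)[OF s] du dv dw by (simp add: m_def)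
  ultimately show ?thesis by blast
qed

lemma boost_chord:
  assumes s: "\<bar>s\<bar> < 1" and u: "cmod u \<le> 1" and v: "cmod v \<le> 1" and p: "0 \<le> p" "p \<le> 1"
  shows "boost s (u + of_real p * (v - u)) = boost s u + of_real (p * (1 + s * Re v)
      / ((1 - p) * (1 + s * Re u) + p * (1 + s * Re v))) * (boost s v - boost s u)"
proof -
  have du: "1 + s * Re u > 0" and dv: "1 + s * Re v > 0" using boost_denom_pos[OF s] u v by auto
  show ?thesis
    using boost_param_algebra[OF du dv p] boost_param_algebra(2)[OF du dv p,
        where m = "sqrt (1 - s^2)" and uy = "Im u" and vy = "Im v"]
    by (simp add: complex_eq_iff boost_def)
qed

lemma klein_auto_boost:
  assumes s: "\<bar>s\<bar> < 1"
  shows "klein_auto (boost s)"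
  unfolding klein_auto_def preserves_disk_def
proof (intro conjI allI impI)
  show "cmod (boost s z) < 1" if "cmod z < 1" for z using cmod_boost[OF s] that by simp
  show "cmod (boost s z) = 1" if "cmod z = 1" for z using cmod_boost[OF s] that by simp
  show "\<exists>l>0. cross (boost s v - boost s u) (boost s w - boost s u) = l * cross (v - u) (w - u)"
    if "cmod u \<le> 1" "cmod v \<le> 1" "cmod w \<le> 1" for u v w
    using cross_boost[OF s that] .
  show "\<exists>al>0. \<exists>be>0. \<forall>p. 0 \<le> p \<and> p \<le> 1 \<longrightarrow> boost s (u + of_real p * (v - u))
      = boost s u + of_real (p * be / ((1 - p) * al + p * be)) * (boost s v - boost s u)"
    if "cmod u \<le> 1" "cmod v \<le> 1" for u v
    using boost_chord[OF s that] boost_denom_pos[OF s] that by blast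
  have s': "\<bar>- s\<bar> < 1" using s by simp
  show "\<exists>K'. ((\<forall>z. cmod z < 1 \<longrightarrow> cmod (K' z) < 1) \<and> (\<forall>z. cmod z = 1 \<longrightarrow> cmod (K' z) = 1)) \<and>
       (\<forall>z. cmod z \<le> 1 \<longrightarrow> boost s (K' z) = z \<and> K' (boost s z) = z)"
    using cmod_boost[OF s'] boost_inverse[OF s] boost_inverse[OF s'] boost_denom_pos[OF s]
      boost_denom_pos[OF s']
    by (intro exI[of _ "boost (- s)"]) (metis less_irrefl order_le_less minus_minus)
qed

lemma klein_auto_dprime:
  assumes K: "klein_auto K" and P: "cmod P < 1" and Q: "cmod Q < 1" and PQ: "P \<noteq> Q"
  shows "dprime (K P) (K Q) = dprime P Q"
proof -
  obtain a b where v: "chord_through P Q a b" using chord_through_exists[OF P Q PQ] by blast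
  obtain p q where pq: "P = a + of_real p * (b - a)" "Q = a + of_real q * (b - a)"
    using chord_through_param[OF v] by blast
  have ab: "cmod a = 1" "cmod b = 1" "a \<noteq> b" using v unfolding chord_through_def S1_iff by auto
  have p: "0 < p" "p < 1" using chord_point_in_disk[OF ab, of p] pq P by auto
  have q: "0 < q" "q < 1" using chord_point_in_disk[OF ab, of q] pq Q by auto
  obtain al be where al_be: "al > 0" "be > 0" and K_chord: "\<forall>p. 0 \<le> p \<and> p \<le> 1 \<longrightarrow>
       K (a + of_real p * (b - a)) = K a + of_real (p * be / ((1 - p) * al + p * be)) * (K b - K a)"
    using klein_auto_chord[OF K, of a b] ab by auto
  define p' where "p' = p * be / ((1 - p) * al + p * be)"
  define q' where "q' = q * be / ((1 - q) * al + q * be)"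
  have KP: "K P = K a + of_real p' * (K b - K a)" and KQ: "K Q = K a + of_real q' * (K b - K a)"
    using K_chord p q pq by (simp_all add: p'_def q'_def)
  have p': "0 < p'" "p' < 1" and q': "0 < q'" "q' < 1"
    using projective_param_cross_ratio(2)[OF al_be] p q by (auto simp: p'_def q'_def)
  have Kab: "cmod (K a) = 1" "cmod (K b) = 1" "K a \<noteq> K b"
    using klein_auto_circle[OF K] klein_auto_inj[OF K] ab by force+
  have "K P \<noteq> K Q" using klein_auto_inj[OF K] P Q PQ by force
  then have "p' \<noteq> q'" using KP KQ by auto
  have "dprime (K P) (K Q) = \<bar>ln (q' * (1 - p') / (p' * (1 - q')))\<bar> / 2"
    by (rule dprime_chord_param[OF Kab KP KQ p' q' \<open>p' \<noteq> q'\<close>])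
  also have "\<dots> = \<bar>ln (q * (1 - p) / (p * (1 - q)))\<bar> / 2"
    using projective_param_cross_ratio(1)[OF al_be p q] by (simp add: p'_def q'_def)
  also have "\<dots> = dprime P Q"
    using dprime_chord_param[OF ab pq p q] pq PQ by fastforce
  finally show ?thesis .
qed

lemma klein_auto_preimage:
  assumes "klein_auto K" "cmod z \<le> 1"
  obtains z' where "K z' = z" "cmod z < 1 \<Longrightarrow> cmod z' < 1" "cmod z = 1 \<Longrightarrow> cmod z' = 1"
  using assms by (elim klein_auto_inverse) (metis order_le_less)

lemma sgn_cross_klein_auto:
  assumes "klein_auto K" "cmod u \<le> 1" "cmod v \<le> 1" "cmod w \<le> 1"
  shows "sgn (cross (K v - K u) (K w - K u)) = sgn (cross (v - u) (w - u))"
  using klein_auto_cross[OF assms] by (auto simp: sgn_mult)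

text \<open>far_from_line is the hypothesis \<delta>(P,Q,R) > \<Delta>'(P,Q) without the infimum; admissible adds
that P, Q, R is positively oriented.\<close>

definition far_from_line :: "complex \<Rightarrow> complex \<Rightarrow> complex \<Rightarrow> bool" where
  "far_from_line P Q R \<longleftrightarrow> (\<forall>S. S \<in> KD \<and> S \<in> affine hull {P, Q} \<longrightarrow> dprime R S > Deltaprime P Q)"

definition admissible :: "complex \<Rightarrow> complex \<Rightarrow> complex \<Rightarrow> bool" where
  "admissible P Q R \<longleftrightarrow>
     cmod P < 1 \<and> cmod Q < 1 \<and> cmod R < 1 \<and> cross (Q - P) (R - P) > 0 \<and> far_from_line P Q R"

lemma far_from_line_klein_auto:
  assumes K: "klein_auto K" and P: "cmod P < 1" and Q: "cmod Q < 1" and R: "cmod R < 1"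
    and PQR: "cross (Q - P) (R - P) \<noteq> 0" and far: "far_from_line P Q R"
  shows "far_from_line (K P) (K Q) (K R)"
  unfolding far_from_line_def
proof (intro allI impI)
  fix S' assume S': "S' \<in> KD \<and> S' \<in> affine hull {K P, K Q}"
  then obtain S where KS: "K S = S'" and S: "cmod S < 1"
    using klein_auto_preimage[OF K, of S'] by (auto simp: KD_iff)
  have PQ: "P \<noteq> Q" using PQR by (auto simp: cross_altdef)
  have "K P \<noteq> K Q" using klein_auto_inj[OF K] P Q PQ by force
  then have "cross (K Q - K P) (K S - K P) = 0" using S' KS affine_hull_2_iff_cross by blast
  then have "cross (Q - P) (S - P) = 0"
    using sgn_cross_klein_auto[OF K, of P Q S] P Q S by (simp add: sgn_0_0)
  then have "S \<in> affine hull {P, Q}" "R \<noteq> S" using affine_hull_2_iff_cross[OF PQ] PQR by auto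
  then have "dprime R S > Deltaprime P Q" using far S unfolding far_from_line_def KD_iff by blast
  moreover have "dprime (K R) S' = dprime R S" using klein_auto_dprime[OF K R S \<open>R \<noteq> S\<close>] KS by simp
  moreover have "Deltaprime (K P) (K Q) = Deltaprime P Q"
    unfolding Deltaprime_def using klein_auto_dprime[OF K P Q PQ] by simp
  ultimately show "dprime (K R) S' > Deltaprime (K P) (K Q)" by simp
qed

lemma admissible_klein_auto:
  assumes K: "klein_auto K" and "admissible P Q R"
  shows "admissible (K P) (K Q) (K R)"
proof -
  have P: "cmod P < 1" and Q: "cmod Q < 1" and R: "cmod R < 1"
    and pos: "cross (Q - P) (R - P) > 0" and far: "far_from_line P Q R"
    using assms(2) unfolding admissible_def by auto
  have "cross (K Q - K P) (K R - K P) > 0"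
    using sgn_cross_klein_auto[OF K, of P Q R] P Q R pos by (simp add: sgn_1_pos)
  then show ?thesis
    unfolding admissible_def
    using klein_auto_disk[OF K] P Q R far_from_line_klein_auto[OF K P Q R _ far] pos by auto
qed

lemma three_step_witness_klein_auto:
  assumes K: "klein_auto K" and P: "cmod P < 1" and Q: "cmod Q < 1" and R: "cmod R < 1"
    and "three_step_witness (K P) (K Q) (K R)"
  shows "three_step_witness P Q R"
proof -
  obtain c' where c': "cmod c' = 1" "cross (K Q - K P) (c' - K P) < 0"
      "cross (other_end (K P) c' - other_end (K Q) c') (K R - other_end (K Q) c') < 0"
    using assms(5) unfolding three_step_witness_def by blast
  then obtain c where Kc: "K c = c'" and c: "cmod c = 1"
    using klein_auto_preimage[OF K, of c'] by auto
  have ends: "other_end (K X) c' = K (other_end X c)" "cmod (other_end X c) \<le> 1" if "cmod X < 1" for X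
    using klein_auto_other_end[OF K that c] cmod_other_end[OF that c] Kc by auto
  have "cross (Q - P) (c - P) < 0"
    using sgn_cross_klein_auto[OF K, of P Q c] P Q c c'(2) Kc by (simp add: sgn_if split: if_splits)
  moreover have "cross (other_end P c - other_end Q c) (R - other_end Q c) < 0"
    using sgn_cross_klein_auto[OF K, of "other_end Q c" "other_end P c" R] ends[OF P] ends[OF Q] R c'(3)
    by (simp add: sgn_if split: if_splits)
  ultimately show ?thesis unfolding three_step_witness_def using c by blast
qed

section \<open>The normalised configuration\<close>

lemma one_minus_mult_pos:
  fixes p q :: real
  assumes "-1 < p" "p < 1" "-1 < q" "q < 1"
  shows "1 - p * q > 0"
proof -
  have "(1 - p) * (1 + q) + (1 + p) * (1 - q) > 0" using assms by (simp add: add_pos_pos)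
  then show ?thesis by (simp add: algebra_simps)
qed

definition real_axis_ratio :: "real \<Rightarrow> real \<Rightarrow> real" where
  "real_axis_ratio p q = (1 + q) * (1 - p) / ((1 + p) * (1 - q))"

lemma real_axis_ratio_gt_1:
  assumes "-1 < p" "p < q" "q < 1"
  shows "real_axis_ratio p q > 1"
proof -
  have "(1 + q) * (1 - p) > (1 + p) * (1 - q)" using assms by (simp add: algebra_simps)
  moreover have "(1 + p) * (1 - q) > 0" using assms by simp
  ultimately show ?thesis unfolding real_axis_ratio_def by simp
qed

lemma dprime_real_axis:
  assumes "-1 < p" "p < q" "q < 1"
  shows "dprime (of_real p) (of_real q) = ln (real_axis_ratio p q) / 2"
proof -
  have ends: "cmod (- 1 :: complex) = 1" "cmod (1 :: complex) = 1" "(- 1 :: complex) \<noteq> 1" by auto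
  have "(of_real x :: complex) = - 1 + of_real ((1 + x) / 2) * (1 - - 1)" for x
    by (simp add: complex_eq_iff field_simps)
  then have "dprime (of_real p) (of_real q)
      = \<bar>ln ((1 + q) / 2 * (1 - (1 + p) / 2) / ((1 + p) / 2 * (1 - (1 + q) / 2)))\<bar> / 2"
    using assms by (intro dprime_chord_param[OF ends]) auto
  also have "(1 + q) / 2 * (1 - (1 + p) / 2) / ((1 + p) / 2 * (1 - (1 + q) / 2)) = real_axis_ratio p q"
  proof -
    have "\<And>a b c d :: real. a / 2 * (b / 2) / (c / 2 * (d / 2)) = (a * b) / (c * d)" by simp
    moreover have "1 - (1 + x) / 2 = (1 - x) / 2" for x :: real by (simp add: field_simps)
    ultimately show ?thesis unfolding real_axis_ratio_def by presburger
  qed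
  finally show ?thesis using real_axis_ratio_gt_1[OF assms] by simp
qed

lemma dprime_imag_axis_0:
  assumes "0 < r" "r < 1"
  shows "dprime (\<i> * of_real r) 0 = ln ((1 + r) / (1 - r)) / 2"
proof -
  have K: "klein_auto (\<lambda>z. (- \<i>) * z)" by (rule klein_auto_rotate) simp
  have "dprime (\<i> * of_real r) 0 = dprime (of_real r) 0"
    using klein_auto_dprime[OF K, of "\<i> * of_real r" 0] assms by (simp add: norm_mult)
  also have "\<dots> = dprime 0 (of_real r)"
    using dprime_commute[of 0 "of_real r"] assms by simp
  also have "\<dots> = ln ((1 + r) / (1 - r)) / 2"
    using dprime_real_axis[of 0 r] assms by (simp add: real_axis_ratio_def)
  finally show ?thesis .
qed

lemma exp_half_ln: "X > 0 \<Longrightarrow> exp (ln X / 2) = sqrt X"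
  by (simp add: powr_half_sqrt[symmetric] powr_def)

lemma ratio_bound_imp:
  fixes r A :: real
  assumes r: "0 < r" "r < 1" and A: "A > 1" and h: "(1 + r) / (1 - r) > A^2"
  shows "r > (A^2 - 1) / (A^2 + 1)"
proof -
  have "1 + r > A^2 * (1 - r)" using h r by (simp add: field_simps)
  then have "r * (A^2 + 1) > A^2 - 1" by (simp add: algebra_simps)
  moreover have "A^2 + 1 > 0" using zero_le_power2[of A] by linarith
  ultimately show ?thesis by (simp add: field_simps)
qed

lemma ratio_square_transform_aux:
  fixes U D :: real assumes D: "D \<noteq> 0"
  shows "((U / D)^2 - 1) / ((U / D)^2 + 1) = (U^2 - D^2) / (U^2 + D^2)"
proof -
  have p: "U^2 + D^2 > 0" using D by (simp add: add_nonneg_pos)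
  have 1: "(U / D)^2 - 1 = (U^2 - D^2) / D^2" using D by (simp add: power_divide diff_divide_distrib)
  have 2: "(U / D)^2 + 1 = (U^2 + D^2) / D^2" using D by (simp add: power_divide add_divide_distrib)
  show ?thesis unfolding 1 2 using D p by simp
qed

lemma ratio_square_transform:
  fixes E :: real assumes E: "E > 1"
  shows "(((E + 1) / (E - 1))^2 - 1) / (((E + 1) / (E - 1))^2 + 1) = 2 * E / (E^2 + 1)"
proof -
  have e1: "E - 1 \<noteq> 0" using E by simp
  have a: "(E + 1)^2 - (E - 1)^2 = 2 * (2 * E)" by (simp add: power2_eq_square algebra_simps)
  have b: "(E + 1)^2 + (E - 1)^2 = 2 * (E^2 + 1)" by (simp add: power2_eq_square algebra_simps)
  have c: "2 * (2 * E) / (2 * (E^2 + 1)) = 2 * E / (E^2 + 1)" by (rule mult_divide_mult_cancel_left) simp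
  show ?thesis unfolding ratio_square_transform_aux[OF e1] a b c by simp
qed

text \<open>At the foot S = 0 of R = i r on the line PQ the hypothesis reads
ln ((1 + r) / (1 - r)) / 2 > \<Delta>'(p, q).\<close>

lemma far_from_line_normal_bound:
  assumes "-1 < p" "p < q" "q < 1" and r: "0 < r" "r < 1"
    and far: "far_from_line (of_real p) (of_real q) (\<i> * of_real r)"
  defines "E \<equiv> sqrt (real_axis_ratio p q)"
  shows "2 * E / (E^2 + 1) < r"
proof -
  have X1: "real_axis_ratio p q > 1" by (rule real_axis_ratio_gt_1[OF assms(1-3)])
  have E1: "E > 1" unfolding E_def using X1 by simp
  have "(0::complex) = of_real p + of_real (- p / (q - p)) * (of_real q - of_real p)"
    using assms(2) by (simp add: field_simps)
  then have "(0::complex) \<in> affine hull {of_real p, of_real q}"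
    unfolding affine_hull_2_param by blast
  then have "dprime (\<i> * of_real r) 0 > Deltaprime (of_real p) (of_real q)"
    using far unfolding far_from_line_def KD_iff by simp
  moreover have "Deltaprime (of_real p) (of_real q) = ln ((E + 1) / (E - 1))"
    unfolding Deltaprime_def dprime_real_axis[OF assms(1-3)] E_def using exp_half_ln X1 by simp
  ultimately have "ln ((1 + r) / (1 - r)) > ln (((E + 1) / (E - 1))^2)"
    using dprime_imag_axis_0[OF r] E1 by (simp add: ln_realpow)
  then have "(1 + r) / (1 - r) > ((E + 1) / (E - 1))^2"
    using E1 r by (subst (asm) ln_less_cancel_iff) auto
  then have "r > (((E + 1) / (E - 1))^2 - 1) / (((E + 1) / (E - 1))^2 + 1)"
    using E1 by (intro ratio_bound_imp[OF r]) (auto simp: field_simps)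
  then show ?thesis using ratio_square_transform[OF E1] by simp
qed

lemma quadratic_pos:
  fixes p t :: real assumes "\<bar>p\<bar> < 1" "\<bar>t\<bar> < 1"
  shows "1 + 2 * p * t + p^2 > 0"
proof -
  have e: "1 + 2 * p * t + p^2 = (p + t)^2 + (1 - t^2)" by (simp add: power2_eq_square algebra_simps)
  have "1 - t^2 > 0" using assms(2) by (simp add: abs_square_less_1)
  then show ?thesis unfolding e by (smt (verit) zero_le_power2)
qed

lemma circle_point_normal:
  fixes p t k N :: real assumes N: "N = 1 + 2 * p * t + p^2" "N \<noteq> 0" and k: "k^2 = 1 - t^2"
  shows "((2 * p + (p^2 + 1) * t) / N)^2 + (- k * (1 - p^2) / N)^2 = 1"
proof -
  have "(2 * p + (p^2 + 1) * t)^2 + (k * (1 - p^2))^2 = N^2"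
    unfolding N(1) using k by algebra
  then show ?thesis
    using N(2) by (simp add: power_divide add_divide_distrib[symmetric] power_mult_distrib)
qed

lemma circle_point_normal_collinear_p:
  fixes p t k N :: real
  assumes N: "N = 1 + 2 * p * t + p^2" "N \<noteq> 0"
  defines "cx \<equiv> (2 * p + (p^2 + 1) * t) / N" and "cy \<equiv> - k * (1 - p^2) / N"
  shows "(p - cx) * (k - cy) - cy * (t + cx) = 0"
proof -
  define U where "U = 2 * p + (p^2 + 1) * t"
  have "(p - cx) * (k - cy) - cy * (t + cx)
      = ((p * N - U) * (k * N + k * (1 - p^2)) + k * (1 - p^2) * (t * N + U)) / N^2"
    unfolding cx_def cy_def U_def using N(2) by (simp add: field_simps power2_eq_square)
  also have "(p * N - U) * (k * N + k * (1 - p^2)) + k * (1 - p^2) * (t * N + U) = 0"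
    unfolding N(1) U_def by (simp add: power2_eq_square algebra_simps)
  finally show ?thesis by simp
qed

lemma circle_point_normal_collinear_q:
  fixes p q t k N :: real
  assumes N: "N = 1 + 2 * p * t + p^2" "N \<noteq> 0"
    and t: "t = (q - p) / (1 - p * q)" and pq: "1 - p * q \<noteq> 0"
  defines "cx \<equiv> (2 * p + (p^2 + 1) * t) / N" and "cy \<equiv> - k * (1 - p^2) / N"
  shows "(q - cx) * (k - cy) + cy * (t - cx) = 0"
proof -
  define U where "U = 2 * p + (p^2 + 1) * t"
  have "(q - cx) * (k - cy) + cy * (t - cx)
      = ((q * N - U) * (k * N + k * (1 - p^2)) - k * (1 - p^2) * (t * N - U)) / N^2"
    unfolding cx_def cy_def U_def using N(2) by (simp add: field_simps power2_eq_square)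
  also have "(q * N - U) * (k * N + k * (1 - p^2)) - k * (1 - p^2) * (t * N - U) = 0"
  proof -
    have "t * (1 - p * q) = q - p" using t pq by simp
    then show ?thesis unfolding N(1) U_def by algebra
  qed
  finally show ?thesis by simp
qed

lemma cr_quotient_simp:
  fixes num den :: real assumes "den \<noteq> 0" "num + den \<noteq> 0"
  shows "4 * (num / den) / (num / den + 1)^2 = 4 * num * den / (num + den)^2"
  using assms by (simp add: field_simps power2_eq_square)

lemma cr_quotient_real_axis:
  fixes p q :: real assumes p: "-1 < p" "p < 1" and q: "-1 < q" "q < 1"
  defines "X \<equiv> (1 + q) * (1 - p) / ((1 + p) * (1 - q))"
  shows "4 * X / (X + 1)^2 = 1 - ((q - p) / (1 - p * q))^2"
proof -
  have a: "1 + p > 0" "1 - q > 0" "1 - p > 0" "1 + q > 0" using p q by auto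
  have pq: "1 - p * q > 0" using one_minus_mult_pos p q by simp
  have s: "(1 + q) * (1 - p) + (1 + p) * (1 - q) = 2 * (1 - p * q)" by (simp add: algebra_simps)
  have d: "(1 + p) * (1 - q) \<noteq> 0" using a by simp
  have "4 * X / (X + 1)^2 = 4 * ((1 + q) * (1 - p)) * ((1 + p) * (1 - q)) / (2 * (1 - p * q))^2"
    unfolding X_def using cr_quotient_simp[OF d] s pq by simp
  also have "\<dots> = ((1 + q) * (1 - p)) * ((1 + p) * (1 - q)) / (1 - p * q)^2"
  proof -
    have g: "\<And>a c :: real. 4 * a / (2 * c)^2 = a / c^2" by (simp add: power2_eq_square)
    show ?thesis
      using g[of "((1 + q) * (1 - p)) * ((1 + p) * (1 - q))" "1 - p * q"] by (simp add: mult.assoc)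
  qed
  also have "((1 + q) * (1 - p)) * ((1 + p) * (1 - q)) = (1 - p^2) * (1 - q^2)"
    by (simp add: power2_eq_square algebra_simps)
  also have "(1 - p^2) * (1 - q^2) = (1 - p * q)^2 - (q - p)^2"
    by (simp add: power2_eq_square algebra_simps)
  also have "((1 - p * q)^2 - (q - p)^2) / (1 - p * q)^2 = 1 - ((q - p) / (1 - p * q))^2"
  proof -
    have g2: "\<And>A B::real. A \<noteq> 0 \<Longrightarrow> (A^2 - B^2) / A^2 = 1 - (B / A)^2"
      by (simp add: power_divide diff_divide_distrib)
    show ?thesis using g2[of "1 - p * q" "q - p"] pq by simp
  qed
  finally show ?thesis .
qed

text \<open>In the normalised configuration c is the second endpoint of the chord through
v2 = -t + i k and p; the choice of t makes the chord through c and q end at v1 = t + i k.\<close>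

definition normal_witness :: "real \<Rightarrow> real \<Rightarrow> real \<Rightarrow> complex" where
  "normal_witness p t k = Complex ((2 * p + (p^2 + 1) * t) / (1 + 2 * p * t + p^2))
                                  (- k * (1 - p^2) / (1 + 2 * p * t + p^2))"

lemma normal_witness:
  fixes p q t k :: real
  assumes pq: "-1 < p" "p < q" "q < 1" and t: "t = (q - p) / (1 - p * q)"
    and k: "k > 0" "k^2 = 1 - t^2"
  shows "cmod (normal_witness p t k) = 1" "Im (normal_witness p t k) < 0"
    "other_end (of_real p) (normal_witness p t k) = Complex (- t) k"
    "other_end (of_real q) (normal_witness p t k) = Complex t k"
proof -
  have pq1: "1 - p * q > 0" using one_minus_mult_pos pq by simp
  have "t^2 < 1" using k by (smt (verit) zero_less_power2)
  then have "\<bar>t\<bar> < 1" by (simp add: abs_square_less_1)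
  define N where "N = 1 + 2 * p * t + p^2"
  have N: "N > 0" unfolding N_def by (rule quadratic_pos) (use pq \<open>\<bar>t\<bar> < 1\<close> in auto)
  define cx where "cx = (2 * p + (p^2 + 1) * t) / N"
  define cy where "cy = - k * (1 - p^2) / N"
  let ?c = "normal_witness p t k"
  have c: "?c = Complex cx cy" by (simp add: normal_witness_def cx_def cy_def N_def)
  show c_circle: "cmod ?c = 1"
    unfolding c cmod_eq_1_iff using circle_point_normal[OF N_def _ k(2)] N cx_def cy_def by simp
  have "1 - p^2 > 0" using pq by (simp add: abs_square_less_1)
  then show cy: "Im ?c < 0" unfolding c cy_def using k N by (simp add: divide_neg_pos mult_pos_pos)
  have p_disk: "cmod (of_real p :: complex) < 1" and q_disk: "cmod (of_real q :: complex) < 1"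
    using pq by auto
  show "other_end (of_real p) ?c = Complex (- t) k"
  proof (rule other_end_unique[OF p_disk c_circle, symmetric])
    show "cmod (Complex (- t) k) = 1" using k unfolding cmod_eq_1_iff by simp
    show "Complex (- t) k \<noteq> ?c" using cy k unfolding c by (auto simp: complex_eq_iff)
    have "cross (of_real p - ?c) (Complex (- t) k - ?c) = (p - cx) * (k - cy) - cy * (t + cx)"
      unfolding cross_altdef c by (simp add: algebra_simps)
    then show "cross (of_real p - ?c) (Complex (- t) k - ?c) = 0"
      using circle_point_normal_collinear_p[OF N_def] N unfolding cx_def cy_def by simp
  qed
  show "other_end (of_real q) ?c = Complex t k"
  proof (rule other_end_unique[OF q_disk c_circle, symmetric])
    show "cmod (Complex t k) = 1" using k unfolding cmod_eq_1_iff by simp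
    show "Complex t k \<noteq> ?c" using cy k unfolding c by (auto simp: complex_eq_iff)
    have "cross (of_real q - ?c) (Complex t k - ?c) = (q - cx) * (k - cy) + cy * (t - cx)"
      unfolding cross_altdef c by (simp add: algebra_simps)
    then show "cross (of_real q - ?c) (Complex t k - ?c) = 0"
      using circle_point_normal_collinear_q[OF N_def _ t] N pq1 unfolding cx_def cy_def by simp
  qed
qed

lemma three_step_witness_normal_explicit:
  fixes p q t k r :: real
  assumes pq: "-1 < p" "p < q" "q < 1" and t: "t = (q - p) / (1 - p * q)"
    and k: "k > 0" "k^2 = 1 - t^2" and "k < r"
  shows "three_step_witness (of_real p) (of_real q) (\<i> * of_real r)"
proof -
  have "t > 0" unfolding t using pq one_minus_mult_pos[of p q] by simp
  note c = normal_witness[OF pq t k]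
  have "cross (of_real q - of_real p) (normal_witness p t k - of_real p) < 0"
    unfolding cross_altdef using pq c(2) by (simp add: mult_pos_neg)
  moreover have "cross (other_end (of_real p) (normal_witness p t k) - other_end (of_real q) (normal_witness p t k))
      (\<i> * of_real r - other_end (of_real q) (normal_witness p t k)) < 0"
    unfolding c(3,4) cross_altdef using \<open>t > 0\<close> \<open>k < r\<close> by (simp add: mult_pos_pos)
  ultimately show ?thesis unfolding three_step_witness_def using c(1) by blast
qed

lemma three_step_witness_normal:
  assumes pq: "-1 < p" "p < q" "q < 1" and r: "0 < r" "r < 1"
    and far: "far_from_line (of_real p) (of_real q) (\<i> * of_real r)"
  shows "three_step_witness (of_real p) (of_real q) (\<i> * of_real r)"
proof (rule three_step_witness_normal_explicit[OF pq refl])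
  define E where "E = sqrt (real_axis_ratio p q)"
  have X1: "real_axis_ratio p q > 1" by (rule real_axis_ratio_gt_1[OF pq])
  then show "2 * E / (E^2 + 1) > 0" unfolding E_def by (simp add: add_pos_nonneg)
  have "(2 * E / (E^2 + 1))^2 = 4 * real_axis_ratio p q / (real_axis_ratio p q + 1)^2"
    unfolding E_def using X1 by (simp add: power_divide power_mult_distrib)
  also have "\<dots> = 1 - ((q - p) / (1 - p * q))^2"
    unfolding real_axis_ratio_def by (rule cr_quotient_real_axis) (use pq in auto)
  finally show "(2 * E / (E^2 + 1))^2 = 1 - ((q - p) / (1 - p * q))^2" .
  show "2 * E / (E^2 + 1) < r" unfolding E_def by (rule far_from_line_normal_bound[OF pq r far])
qed

section \<open>Reduction to the normalised configuration\<close>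

lemma three_step_witness_reduce:
  assumes K: "klein_auto K" and adm: "admissible P Q R"
    and "admissible (K P) (K Q) (K R) \<Longrightarrow> three_step_witness (K P) (K Q) (K R)"
  shows "three_step_witness P Q R"
  using three_step_witness_klein_auto[OF K _ _ _ assms(3)[OF admissible_klein_auto[OF K adm]]] adm
  unfolding admissible_def by blast

lemma three_step_witness_axes:
  assumes adm: "admissible (of_real p) (of_real q) (\<i> * of_real r)"
  shows "three_step_witness (of_real p) (of_real q) (\<i> * of_real r)"
proof -
  have p: "-1 < p" "p < 1" and q: "-1 < q" "q < 1" and r: "\<bar>r\<bar> < 1" and "(q - p) * r > 0"
    using adm unfolding admissible_def by (auto simp: cross_altdef norm_mult)
  then consider "p < q" "0 < r" | "q < p" "r < 0" by (auto simp: zero_less_mult_iff)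
  then show ?thesis
  proof cases
    case 1
    then show ?thesis using three_step_witness_normal[of p q r] p q r adm by (simp add: admissible_def)
  next
    case 2
    show ?thesis
    proof (rule three_step_witness_reduce[OF klein_auto_rotate[of "- 1"] adm])
      assume "admissible (- 1 * of_real p) (- 1 * of_real q) (- 1 * (\<i> * of_real r))"
      then show "three_step_witness (- 1 * of_real p) (- 1 * of_real q) (- 1 * (\<i> * of_real r))"
        using three_step_witness_normal[of "- p" "- q" "- r"] 2 p q r
        by (simp add: admissible_def)
    qed simp
  qed
qed

lemma three_step_witness_real_base:
  assumes adm: "admissible P Q R" and "Im P = 0" "Im Q = 0"
  shows "three_step_witness P Q R"
proof (rule three_step_witness_reduce[OF klein_auto_boost adm])
  show "\<bar>- Re R\<bar> < 1" using adm abs_Re_le_cmod[of R] unfolding admissible_def by linarith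
  assume "admissible (boost (- Re R) P) (boost (- Re R) Q) (boost (- Re R) R)"
  moreover have "boost (- Re R) P = of_real (Re (boost (- Re R) P))"
    "boost (- Re R) Q = of_real (Re (boost (- Re R) Q))"
    "boost (- Re R) R = \<i> * of_real (Im (boost (- Re R) R))"
    using assms by (simp_all add: boost_def complex_eq_iff)
  ultimately show "three_step_witness (boost (- Re R) P) (boost (- Re R) Q) (boost (- Re R) R)"
    using three_step_witness_axes by metis
qed

lemma three_step_witness_vertical_base:
  assumes adm: "admissible P Q R" and "Re P = Re Q"
  shows "three_step_witness P Q R"
proof (rule three_step_witness_reduce[OF klein_auto_boost adm])
  show "\<bar>- Re P\<bar> < 1" using adm abs_Re_le_cmod[of P] unfolding admissible_def by linarith
  assume adm': "admissible (boost (- Re P) P) (boost (- Re P) Q) (boost (- Re P) R)"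
  have "Re (boost (- Re P) P) = 0" "Re (boost (- Re P) Q) = 0" using assms by (simp_all add: boost_def)
  then show "three_step_witness (boost (- Re P) P) (boost (- Re P) Q) (boost (- Re P) R)"
    by (intro three_step_witness_reduce[OF klein_auto_rotate[of "- \<i>"] adm']
        three_step_witness_real_base) simp_all
qed

lemma admissible_three_step_witness:
  assumes adm: "admissible P Q R"
  shows "three_step_witness P Q R"
proof -
  define d where "d = Q - P"
  have "d \<noteq> 0" using adm unfolding admissible_def d_def by (auto simp: cross_altdef)
  define w where "w = \<i> * cnj d / of_real (cmod d)"
  have w: "cmod w = 1" unfolding w_def using \<open>d \<noteq> 0\<close> by (simp add: norm_mult norm_divide)
  have "w * Q - w * P = w * d" by (simp add: d_def right_diff_distrib)
  also have "\<dots> = \<i> * (cnj d * d) / of_real (cmod d)" by (simp add: w_def mult_ac)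
  also have "cnj d * d = of_real ((cmod d)^2)" by (metis complex_norm_square mult.commute)
  finally have "Re (w * Q - w * P) = 0" by simp
  then have "Re (w * P) = Re (w * Q)" by simp
  then show ?thesis
    by (intro three_step_witness_reduce[OF klein_auto_rotate[OF w] adm]
        three_step_witness_vertical_base)
qed

lemma dprime_nonneg: "dprime a b \<ge> 0"
  unfolding dprime_def by (cases "chord_ends a b") simp

lemma far_from_line_if_delta_gt:
  assumes "delta P Q R > Deltaprime P Q"
  shows "far_from_line P Q R"
  unfolding far_from_line_def
proof (intro allI impI)
  fix S assume "S \<in> KD \<and> S \<in> affine hull {P, Q}"
  moreover have "bdd_below {dprime R S | S. S \<in> KD \<and> S \<in> affine hull {P, Q}}"
    by (rule bdd_belowI[of _ 0]) (auto simp: dprime_nonneg)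
  ultimately have "delta P Q R \<le> dprime R S" unfolding delta_def by (blast intro: cInf_lower)
  then show "dprime R S > Deltaprime P Q" using assms by simp
qed

lemma admissible_reorder:
  assumes P: "cmod P < 1" and Q: "cmod Q < 1" and R: "cmod R < 1"
    and "\<not> collinear {P, Q, R}" and delta: "delta P Q R > Deltaprime P Q"
  obtains P' Q' where "{P', Q'} = {P, Q}" "admissible P' Q' R"
proof (cases "cross (Q - P) (R - P) > 0")
  case True
  then show ?thesis using that[of P Q] assms far_from_line_if_delta_gt[OF delta]
    by (simp add: admissible_def)
next
  case False
  have "cross (Q - P) (R - P) \<noteq> 0" using assms(4) collinear_if_cross_eq_0 by blast
  with False have "cross (P - Q) (R - Q) > 0" by (simp add: cross_altdef algebra_simps)
  moreover have "P \<noteq> Q" using assms(4) by auto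
  then have "delta Q P R > Deltaprime Q P"
    using delta dprime_commute[OF P Q] by (simp add: delta_def Deltaprime_def insert_commute)
  ultimately show ?thesis using that[of Q P] P Q R far_from_line_if_delta_gt
    by (auto simp: admissible_def)
qed

theorem lemma4p3:
  fixes P Q R :: complex
  assumes "P \<in> KD" and "Q \<in> KD" and "R \<in> KD"
    and "\<not> collinear {P, Q, R}"
    and "delta P Q R > Deltaprime P Q"
  shows "\<exists>w\<in>S1. \<forall>w'. circ w' = w \<longrightarrow>
           (psi_lift (convex hull {P, Q, R}) ^^ 3) w' < w' + 1"
proof -
  have P: "cmod P < 1" and Q: "cmod Q < 1" and R: "cmod R < 1" using assms(1-3) KD_iff by auto
  obtain P' Q' where PQ': "{P', Q'} = {P, Q}" and adm: "admissible P' Q' R"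
    using admissible_reorder[OF P Q R assms(4,5)] .
  then have "convex hull {P, Q, R} = convex hull {P', Q', R}" by (metis insert_commute insert_is_Un)
  then show ?thesis
    using psi_lift_power_3_less[OF _ _ R admissible_three_step_witness[OF adm]] adm
    by (simp add: admissible_def)
qed

end
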